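(* Let $F$ be a free group of rank greater than one. Let $H$ be a finitely generated subgroup of infinite index in $F$ and let $\{\gamma_1,\ldots,\gamma_n\}$ be a finite subset of $F\smallsetminus H$. Then there exist an integer $k$ and a surjective homomorphism $f\colon F\to A_k$ onto the alternating group $A_k$ such that $f(\gamma_i)\notin f(H)$ for all $i=1,\ldots,n$. *)

theory Defs
  imports "HOL-Algebra.Algebra"
begin

definition word_eval :: "('a, 'b) monoid_scheme \<Rightarrow> ('a \<times> bool) list \<Rightarrow> 'a" where
  "word_eval G w = foldr (\<lambda>(x, b) acc. (if b then inv\<^bsub>G\<^esub> x else x) \<otimes>\<^bsub>G\<^esub> acc) w \<one>\<^bsub>G\<^esub>"

definition reduced_word :: "('a \<times> bool) list \<Rightarrow> bool" where
  "reduced_word w = (\<forall>i. Suc i < length w \<longrightarrow>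
      \<not> (fst (w ! i) = fst (w ! Suc i) \<and> snd (w ! i) \<noteq> snd (w ! Suc i)))"

definition free_basis :: "('a, 'b) monoid_scheme \<Rightarrow> 'a set \<Rightarrow> bool" where
  "free_basis G B = (B \<subseteq> carrier G \<and> generate G B = carrier G \<and>
     (\<forall>w. w \<noteq> ([] :: (_ \<times> bool) list) \<and> set (map fst w) \<subseteq> B \<and> reduced_word w \<longrightarrow> word_eval G w \<noteq> \<one>\<^bsub>G\<^esub>))"

end

theory Submission
  imports Defs
begin

(* F acts on the right cosets of H from the left
   by g . P = P g^-1.  Reading words for the elements of S and for the gamma_i from right to
   left, starting at H, visits finitely many cosets; they form a finite connected piece of the
   Schreier graph of H, whose edges labelled c in B give partial injections pi_c of the
   numbered vertices {1..m}.  As H has infinite index, some vertex Q lacks an outgoing edge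
   for some letter b (a free slot).  A combinatorial construction extends the pi_c to even
   permutations tau_c of some {1..k} generating A_k: first to permutations of {1..m+1}, with
   tau_b sending Q to the new point m+1; then two long odd cycles through a further new point
   are attached, whose M-th powers (M killing all permutations of {1..m+1}) have a 3-cycle as
   commutator; and a transitive group of even permutations containing such a 3-cycle, with
   generators anchored at it, is all of A_k.  The homomorphism f : F -> A_k extending tau
   (universal property of a free basis) makes f(H) fix the number of H, while f(gamma_i)
   moves it to the number of gamma_i . H, so f(gamma_i) is not in f(H). *)

definition mapw :: "('a \<Rightarrow> 'c) \<Rightarrow> ('a \<times> bool) list \<Rightarrow> ('c \<times> bool) list" where
  "mapw \<phi> w = map (\<lambda>(x, b). (\<phi> x, b)) w"

definition invw :: "('a \<times> bool) list \<Rightarrow> ('a \<times> bool) list" where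
  "invw w = rev (map (\<lambda>(x, b). (x, \<not> b)) w)"

lemma word_eval_Nil [simp]: "word_eval G [] = \<one>\<^bsub>G\<^esub>"
  by (simp add: word_eval_def)

lemma word_eval_Cons [simp]:
  "word_eval G ((x, b) # w) = (if b then inv\<^bsub>G\<^esub> x else x) \<otimes>\<^bsub>G\<^esub> word_eval G w"
  by (simp add: word_eval_def)

lemma mapw_simps [simp]:
  "mapw \<phi> [] = []" "mapw \<phi> ((x, b) # w) = (\<phi> x, b) # mapw \<phi> w"
  "mapw \<phi> (u @ v) = mapw \<phi> u @ mapw \<phi> v" "mapw \<phi> (invw w) = invw (mapw \<phi> w)"
  by (auto simp: mapw_def invw_def rev_map)

lemma letters_mapw_subset:
  "set (map fst w) \<subseteq> B \<Longrightarrow> \<phi> ` B \<subseteq> C \<Longrightarrow> set (map fst (mapw \<phi> w)) \<subseteq> C"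
  by (induct w) (auto simp: mapw_def)

lemma letters_invw [simp]: "fst ` set (invw w) = fst ` set w"
  by (induct w) (auto simp: invw_def)

lemma (in group) word_eval_closed:
  "set (map fst w) \<subseteq> carrier G \<Longrightarrow> word_eval G w \<in> carrier G"
proof (induct w)
  case (Cons a w) thus ?case by (cases a) auto
qed simp

lemma (in group) word_eval_append:
  "set (map fst u) \<subseteq> carrier G \<Longrightarrow> set (map fst v) \<subseteq> carrier G \<Longrightarrow>
   word_eval G (u @ v) = word_eval G u \<otimes> word_eval G v"
proof (induct u)
  case (Cons a u)
  obtain x b where "a = (x, b)" by (cases a)
  thus ?case using Cons by (auto simp: m_assoc word_eval_closed)
qed (simp add: word_eval_closed)

lemma (in group) word_eval_cancel:
  "x \<in> carrier G \<Longrightarrow> set (map fst v) \<subseteq> carrier G \<Longrightarrow>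
   word_eval G ((x, b) # (x, \<not> b) # v) = word_eval G v"
  by (cases b) (auto simp: m_assoc[symmetric] word_eval_closed)

lemma (in group) word_eval_cancel_middle:
  assumes "set (map fst u) \<subseteq> carrier G" "x \<in> carrier G" "set (map fst v) \<subseteq> carrier G"
  shows "word_eval G (u @ (x, b) # (x, \<not> b) # v) = word_eval G (u @ v)"
proof -
  have "set (map fst ((x, b) # (x, \<not> b) # v)) \<subseteq> carrier G" using assms by auto
  thus ?thesis using assms word_eval_append word_eval_cancel by metis
qed

lemma (in group) word_eval_invw:
  "set (map fst w) \<subseteq> carrier G \<Longrightarrow> word_eval G (invw w) = inv (word_eval G w)"
proof (induct w)
  case Nil thus ?case by (simp add: invw_def)
next
  case (Cons a w)
  obtain x b where a: "a = (x, b)" by (cases a)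
  have x: "x \<in> carrier G" and w: "set (map fst w) \<subseteq> carrier G" using Cons a by auto
  have "invw (a # w) = invw w @ [(x, \<not> b)]" by (simp add: invw_def a)
  moreover have "set (map fst (invw w)) \<subseteq> carrier G" using w by simp
  ultimately have "word_eval G (invw (a # w)) = word_eval G (invw w) \<otimes> word_eval G [(x, \<not> b)]"
    using word_eval_append x by simp
  thus ?case using Cons a x w by (cases b) (auto simp: inv_mult_group word_eval_closed)
qed

lemma (in group) generate_word:
  assumes "g \<in> generate G B" "B \<subseteq> carrier G"
  shows "\<exists>w. set (map fst w) \<subseteq> B \<and> word_eval G w = g"
  using assms(1)
proof induct
  case one show ?case by (intro exI[of _ "[]"]) simp
next
  case (incl h) thus ?case using assms(2) by (intro exI[of _ "[(h, False)]"]) auto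
next
  case (inv h) thus ?case using assms(2) by (intro exI[of _ "[(h, True)]"]) auto
next
  case (eng h1 h2)
  then obtain w1 w2 where w1: "set (map fst w1) \<subseteq> B" "word_eval G w1 = h1"
    and w2: "set (map fst w2) \<subseteq> B" "word_eval G w2 = h2" by blast
  hence "word_eval G (w1 @ w2) = h1 \<otimes> h2"
    using word_eval_append[of w1 w2] assms(2) by (metis subset_trans)
  thus ?case using w1 w2 by (intro exI[of _ "w1 @ w2"]) auto
qed

text \<open>Freeness: every relation among the letters of a free basis holds in every group.
  A trivial word is not reduced, so it contains a cancelling pair; remove it and induct.\<close>

lemma free_basis_relation:
  assumes F: "group F" and K: "group K" and fb: "free_basis F B" and \<phi>: "\<phi> ` B \<subseteq> carrier K"
  shows "set (map fst w) \<subseteq> B \<Longrightarrow> word_eval F w = \<one>\<^bsub>F\<^esub> \<Longrightarrow> word_eval K (mapw \<phi> w) = \<one>\<^bsub>K\<^esub>"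
proof (induct "length w" arbitrary: w rule: less_induct)
  case less
  interpret F: group F by fact
  interpret K: group K by fact
  have BF: "B \<subseteq> carrier F" using fb by (simp add: free_basis_def)
  show ?case
  proof (cases "w = []")
    case False
    hence "\<not> reduced_word w" using fb less(2,3) by (auto simp: free_basis_def)
    then obtain i where i: "Suc i < length w" "fst (w ! i) = fst (w ! Suc i)"
      "snd (w ! i) \<noteq> snd (w ! Suc i)" by (auto simp: reduced_word_def)
    obtain x b where xb: "w ! i = (x, b)" by (cases "w ! i")
    have "w ! Suc i = (x, \<not> b)" using i xb by (cases "w ! Suc i") auto
    hence w: "w = take i w @ (x, b) # (x, \<not> b) # drop (Suc (Suc i)) w" (is "w = ?u @ _ # _ # ?v")
      using i xb by (metis Cons_nth_drop_Suc Suc_lessD append_take_drop_id)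
    have sets: "set (map fst ?u) \<subseteq> B" "x \<in> B" "set (map fst ?v) \<subseteq> B"
      using less(2) i xb by (auto dest: in_set_takeD in_set_dropD nth_mem)
    have uF: "set (map fst ?u) \<subseteq> carrier F" and xF: "x \<in> carrier F"
      and vF: "set (map fst ?v) \<subseteq> carrier F" using sets BF by auto
    have "word_eval F (?u @ ?v) = word_eval F w"
      using F.word_eval_cancel_middle[OF uF xF vF, of b] arg_cong[OF w, of "word_eval F"] by argo
    hence trivial: "word_eval F (?u @ ?v) = \<one>\<^bsub>F\<^esub>" using less(3) by argo
    have shorter: "length (?u @ ?v) < length w" and letters: "set (map fst (?u @ ?v)) \<subseteq> B"
      using sets i by auto
    have uK: "set (map fst (mapw \<phi> ?u)) \<subseteq> carrier K" and xK: "\<phi> x \<in> carrier K"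
      and vK: "set (map fst (mapw \<phi> ?v)) \<subseteq> carrier K"
      using sets \<phi> letters_mapw_subset[OF sets(1) \<phi>] letters_mapw_subset[OF sets(3) \<phi>] by auto
    have "mapw \<phi> w = mapw \<phi> ?u @ (\<phi> x, b) # (\<phi> x, \<not> b) # mapw \<phi> ?v"
      by (subst w) (simp only: mapw_simps)
    hence "word_eval K (mapw \<phi> w) = word_eval K (mapw \<phi> (?u @ ?v))"
      using K.word_eval_cancel_middle[OF uK xK vK, of b] by (simp only: mapw_simps)
    thus ?thesis using less(1)[OF shorter letters trivial] by argo
  qed simp
qed

lemma free_basis_word_eq:
  assumes F: "group F" and K: "group K" and fb: "free_basis F B" and \<phi>: "\<phi> ` B \<subseteq> carrier K"
    and u: "set (map fst u) \<subseteq> B" and v: "set (map fst v) \<subseteq> B"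
    and eq: "word_eval F u = word_eval F v"
  shows "word_eval K (mapw \<phi> u) = word_eval K (mapw \<phi> v)"
proof -
  interpret F: group F by fact
  interpret K: group K by fact
  have "B \<subseteq> carrier F" using fb by (simp add: free_basis_def)
  hence uF: "set (map fst u) \<subseteq> carrier F" and vF: "set (map fst v) \<subseteq> carrier F" using u v by auto
  hence "word_eval F (u @ invw v) = word_eval F v \<otimes>\<^bsub>F\<^esub> inv\<^bsub>F\<^esub> word_eval F v"
    using eq by (simp add: F.word_eval_append F.word_eval_invw)
  hence "word_eval F (u @ invw v) = \<one>\<^bsub>F\<^esub>" using vF by (simp add: F.word_eval_closed)
  moreover have "set (map fst (u @ invw v)) \<subseteq> B" using u v by simp
  ultimately have "word_eval K (mapw \<phi> (u @ invw v)) = \<one>\<^bsub>K\<^esub>"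
    using free_basis_relation[OF F K fb \<phi>] by blast
  moreover have uK: "set (map fst (mapw \<phi> u)) \<subseteq> carrier K" and vK: "set (map fst (mapw \<phi> v)) \<subseteq> carrier K"
    using letters_mapw_subset[OF u \<phi>] letters_mapw_subset[OF v \<phi>] by auto
  ultimately have "word_eval K (mapw \<phi> u) \<otimes>\<^bsub>K\<^esub> inv\<^bsub>K\<^esub> word_eval K (mapw \<phi> v) = \<one>\<^bsub>K\<^esub>"
    using K.word_eval_append[OF uK] K.word_eval_invw[OF vK] by simp
  from K.inv_equality[OF this] show ?thesis
    using K.word_eval_closed[OF uK] K.word_eval_closed[OF vK] by simp
qed

definition basis_word :: "('a, 'm) monoid_scheme \<Rightarrow> 'a set \<Rightarrow> 'a \<Rightarrow> ('a \<times> bool) list" where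
  "basis_word F B g = (SOME w. set (map fst w) \<subseteq> B \<and> word_eval F w = g)"

lemma basis_word:
  assumes "group F" "B \<subseteq> carrier F" "g \<in> generate F B"
  shows "set (map fst (basis_word F B g)) \<subseteq> B" "word_eval F (basis_word F B g) = g"
  using someI_ex[OF group.generate_word[OF assms(1,3,2)]] by (simp_all add: basis_word_def)

definition free_extension ::
  "('a, 'm) monoid_scheme \<Rightarrow> 'a set \<Rightarrow> ('c, 'n) monoid_scheme \<Rightarrow> ('a \<Rightarrow> 'c) \<Rightarrow> 'a \<Rightarrow> 'c" where
  "free_extension F B K \<phi> g = word_eval K (mapw \<phi> (basis_word F B g))"

lemma free_extension_word:
  assumes F: "group F" and K: "group K" and fb: "free_basis F B" and \<phi>: "\<phi> ` B \<subseteq> carrier K"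
    and w: "set (map fst w) \<subseteq> B"
  shows "free_extension F B K \<phi> (word_eval F w) = word_eval K (mapw \<phi> w)"
proof -
  let ?P = "\<lambda>w'. set (map fst w') \<subseteq> B \<and> word_eval F w' = word_eval F w"
  have "?P (SOME w'. ?P w')" using someI[of ?P w] w by blast
  thus ?thesis unfolding free_extension_def basis_word_def
    using free_basis_word_eq[OF F K fb \<phi> _ w] by blast
qed

lemma free_extension_epi:
  assumes F: "group F" and K: "group K" and fb: "free_basis F B" and \<phi>: "\<phi> ` B \<subseteq> carrier K"
    and gen: "generate K (\<phi> ` B) = carrier K"
  shows "free_extension F B K \<phi> \<in> epi F K"
proof -
  interpret F: group F by fact
  interpret K: group K by fact
  let ?f = "free_extension F B K \<phi>"
  have BF: "B \<subseteq> carrier F" and genB: "generate F B = carrier F" using fb by (auto simp: free_basis_def)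
  have word: "\<exists>w. set (map fst w) \<subseteq> B \<and> word_eval F w = g" if "g \<in> carrier F" for g
    using F.generate_word[OF _ BF] that genB by auto
  have fw: "?f (word_eval F w) = word_eval K (mapw \<phi> w)" if "set (map fst w) \<subseteq> B" for w
    using free_extension_word[OF F K fb \<phi> that] .
  have hom: "?f \<in> hom F K"
  proof (rule homI)
    fix g assume "g \<in> carrier F"
    then obtain w where w: "set (map fst w) \<subseteq> B" "word_eval F w = g" using word by blast
    have "word_eval K (mapw \<phi> w) \<in> carrier K"
      by (rule K.word_eval_closed[OF letters_mapw_subset[OF w(1) \<phi>]])
    thus "?f g \<in> carrier K" using fw[OF w(1)] w(2) by argo
  next
    fix g h assume "g \<in> carrier F" "h \<in> carrier F"
    then obtain w v where w: "set (map fst w) \<subseteq> B" "word_eval F w = g"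
      and v: "set (map fst v) \<subseteq> B" "word_eval F v = h" using word by blast
    have wv: "set (map fst (w @ v)) \<subseteq> B" using w(1) v(1) by simp
    have "g \<otimes>\<^bsub>F\<^esub> h = word_eval F (w @ v)"
      using F.word_eval_append[of w v] w v BF by (metis subset_trans)
    hence "?f (g \<otimes>\<^bsub>F\<^esub> h) = word_eval K (mapw \<phi> w @ mapw \<phi> v)"
      using fw[OF wv] by (simp only: mapw_simps)
    also have "\<dots> = word_eval K (mapw \<phi> w) \<otimes>\<^bsub>K\<^esub> word_eval K (mapw \<phi> v)"
      using letters_mapw_subset[OF w(1) \<phi>] letters_mapw_subset[OF v(1) \<phi>] by (rule K.word_eval_append)
    also have "\<dots> = ?f g \<otimes>\<^bsub>K\<^esub> ?f h" using fw[OF w(1)] fw[OF v(1)] w(2) v(2) by argo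
    finally show "?f (g \<otimes>\<^bsub>F\<^esub> h) = ?f g \<otimes>\<^bsub>K\<^esub> ?f h" .
  qed
  then interpret f: group_hom F K ?f
    using F.is_group K.is_group by (simp add: group_hom_def group_hom_axioms_def)
  have "?f c = \<phi> c" if "c \<in> B" for c
  proof -
    have "c \<in> carrier F" "\<phi> c \<in> carrier K" using that BF \<phi> by auto
    thus ?thesis using fw[of "[(c, False)]"] that by simp
  qed
  hence "?f ` carrier F = generate K (\<phi> ` B)"
    using f.generate_img[OF BF] genB by (simp cong: image_cong)
  thus ?thesis using hom gen by (simp add: epi_def)
qed

lemma three_cycle_apply:
  assumes "x \<noteq> y" "y \<noteq> z" "x \<noteq> z"
  shows "cycle_of_list [x, y, z] w = (if w = x then y else if w = y then z else if w = z then x else w)"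
  using assms by (auto simp: transpose_def)

declare cycle_of_list.simps [simp del]

lemma three_cycle_rotate:
  assumes "x \<noteq> y" "y \<noteq> z" "x \<noteq> z"
  shows "cycle_of_list [x, y, z] = cycle_of_list [y, z, x]"
  using assms by (auto simp: fun_eq_iff three_cycle_apply)

lemma three_cycle_inv:
  assumes "x \<noteq> y" "y \<noteq> z" "x \<noteq> z"
  shows "inv' (cycle_of_list [x, y, z]) = cycle_of_list [x, z, y]"
proof (rule inv_unique_comp)
  show "cycle_of_list [x, y, z] \<circ> cycle_of_list [x, z, y] = id"
    using assms by (auto simp: fun_eq_iff three_cycle_apply)
  show "cycle_of_list [x, z, y] \<circ> cycle_of_list [x, y, z] = id"
    using assms by (auto simp: fun_eq_iff three_cycle_apply)
qed

definition perm_closed :: "('a \<Rightarrow> 'a) set \<Rightarrow> bool" where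
  "perm_closed G \<longleftrightarrow> (\<forall>f\<in>G. bij f \<and> inv' f \<in> G \<and> (\<forall>g\<in>G. f \<circ> g \<in> G))"

lemma perm_closed_comp: "perm_closed G \<Longrightarrow> f \<in> G \<Longrightarrow> g \<in> G \<Longrightarrow> f \<circ> g \<in> G"
  and perm_closed_inv: "perm_closed G \<Longrightarrow> f \<in> G \<Longrightarrow> inv' f \<in> G"
  and perm_closed_bij: "perm_closed G \<Longrightarrow> f \<in> G \<Longrightarrow> bij f"
  unfolding perm_closed_def by blast+

definition has_3cycles :: "('a \<Rightarrow> 'a) set \<Rightarrow> 'a set \<Rightarrow> bool" where
  "has_3cycles G U \<longleftrightarrow>
     (\<forall>x\<in>U. \<forall>y\<in>U. \<forall>z\<in>U. x \<noteq> y \<and> y \<noteq> z \<and> x \<noteq> z \<longrightarrow> cycle_of_list [x, y, z] \<in> G)"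

lemma has_3cyclesD:
  "has_3cycles G U \<Longrightarrow> x \<in> U \<Longrightarrow> y \<in> U \<Longrightarrow> z \<in> U \<Longrightarrow> x \<noteq> y \<Longrightarrow> y \<noteq> z \<Longrightarrow> x \<noteq> z
   \<Longrightarrow> cycle_of_list [x, y, z] \<in> G"
  unfolding has_3cycles_def by blast

lemma three_cycle_reverse:
  assumes "perm_closed G" "x \<noteq> y" "y \<noteq> z" "x \<noteq> z" "cycle_of_list [x, y, z] \<in> G"
  shows "cycle_of_list [x, z, y] \<in> G"
  using perm_closed_inv[OF assms(1,5)] three_cycle_inv[of x y z] assms by simp

lemma three_cycle_conjugate:
  assumes G: "perm_closed G" and g: "g \<in> G" and c: "cycle_of_list [x, y, z] \<in> G"
    and d: "x \<noteq> y" "y \<noteq> z" "x \<noteq> z"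
  shows "cycle_of_list [g x, g y, g z] \<in> G"
proof -
  have "g \<circ> cycle_of_list [x, y, z] \<circ> inv' g = cycle_of_list (map g [x, y, z])"
    using conjugation_of_cycle[OF _ perm_closed_bij[OF G g]] d by simp
  moreover have "g \<circ> cycle_of_list [x, y, z] \<circ> inv' g \<in> G"
    using perm_closed_comp[OF G] perm_closed_inv[OF G g] g c by auto
  ultimately show ?thesis by simp
qed

lemma has_3cycles_triangle:
  assumes "perm_closed G" "x \<noteq> y" "y \<noteq> z" "x \<noteq> z" "cycle_of_list [x, y, z] \<in> G"
  shows "has_3cycles G {x, y, z}"
proof -
  have a: "cycle_of_list [x, z, y] \<in> G" using three_cycle_reverse[OF assms] .
  have e1: "cycle_of_list [y, z, x] \<in> G" using assms(5) three_cycle_rotate[OF assms(2-4)] by simp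
  have e2: "cycle_of_list [z, x, y] \<in> G" using e1 three_cycle_rotate[of y z x] assms(2-4) by simp
  have e3: "cycle_of_list [z, y, x] \<in> G" using a three_cycle_rotate[of x z y] assms(2-4) by simp
  have e4: "cycle_of_list [y, x, z] \<in> G" using e3 three_cycle_rotate[of z y x] assms(2-4) by simp
  show ?thesis unfolding has_3cycles_def
  proof (intro ballI impI)
    fix u v w assume u: "u \<in> {x, y, z}" and v: "v \<in> {x, y, z}" and w: "w \<in> {x, y, z}"
      and d: "u \<noteq> v \<and> v \<noteq> w \<and> u \<noteq> w"
    from u have "u = x \<or> u = y \<or> u = z" by simp
    moreover from v have "v = x \<or> v = y \<or> v = z" by simp
    moreover from w have "w = x \<or> w = y \<or> w = z" by simp
    ultimately show "cycle_of_list [u, v, w] \<in> G" using assms(5) a e1 e2 e3 e4 d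
      by (elim disjE) simp_all
  qed
qed

lemma has_3cycles_star:
  assumes G: "perm_closed G" and pq: "p \<in> W" "q \<in> W" "p \<noteq> q"
    and T: "\<And>x. x \<in> W \<Longrightarrow> x \<noteq> p \<Longrightarrow> x \<noteq> q \<Longrightarrow> cycle_of_list [p, q, x] \<in> G"
  shows "has_3cycles G W"
proof -
  have comp: "f \<circ> g \<in> G" if "f \<in> G" "g \<in> G" for f g using G that by (rule perm_closed_comp)
  have Ti: "cycle_of_list [p, x, q] \<in> G" if "x \<in> W" "x \<noteq> p" "x \<noteq> q" for x
    using three_cycle_reverse[OF G, of p q x] T that pq by auto
  have P: "cycle_of_list [p, v, w] \<in> G" if "v \<in> W" "w \<in> W" "p \<noteq> v" "v \<noteq> w" "p \<noteq> w" for v w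
  proof -
    consider "v = q" | "w = q" | "v \<noteq> q" "w \<noteq> q" by blast
    thus ?thesis
    proof cases
      case 1 thus ?thesis using T that by auto
    next
      case 2 thus ?thesis using Ti that by auto
    next
      case 3
      have "cycle_of_list [p, v, w] = cycle_of_list [p, q, w] \<circ> cycle_of_list [p, v, q]"
        using that 3 pq by (auto simp: fun_eq_iff three_cycle_apply)
      thus ?thesis using comp T Ti that 3 by auto
    qed
  qed
  show ?thesis unfolding has_3cycles_def
  proof (intro ballI impI)
    fix x y z assume xyz: "x \<in> W" "y \<in> W" "z \<in> W" "x \<noteq> y \<and> y \<noteq> z \<and> x \<noteq> z"
    consider "x = p" | "y = p" | "z = p" | "x \<noteq> p" "y \<noteq> p" "z \<noteq> p" by blast
    thus "cycle_of_list [x, y, z] \<in> G"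
    proof cases
      case 1 thus ?thesis using P xyz by auto
    next
      case 2 thus ?thesis using P[of z x] xyz three_cycle_rotate[of x y z] by auto
    next
      case 3 thus ?thesis using P[of x y] xyz three_cycle_rotate[of y z x] three_cycle_rotate[of x y z] by auto
    next
      case 4
      have "cycle_of_list [x, y, z] = cycle_of_list [p, x, y] \<circ> cycle_of_list [p, y, z]"
        using 4 xyz by (auto simp: fun_eq_iff three_cycle_apply)
      thus ?thesis using comp P 4 xyz by auto
    qed
  qed
qed

lemma has_3cycles_image:
  assumes G: "perm_closed G" and g: "g \<in> G" and U: "has_3cycles G U"
  shows "has_3cycles G (g ` U)"
  unfolding has_3cycles_def
proof (intro ballI impI)
  fix x' y' z' assume "x' \<in> g ` U" "y' \<in> g ` U" "z' \<in> g ` U" and d: "x' \<noteq> y' \<and> y' \<noteq> z' \<and> x' \<noteq> z'"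
  then obtain x y z where xyz: "x \<in> U" "y \<in> U" "z \<in> U" "x' = g x" "y' = g y" "z' = g z" by blast
  have dd: "x \<noteq> y" "y \<noteq> z" "x \<noteq> z" using d xyz by auto
  show "cycle_of_list [x', y', z'] \<in> G"
    using three_cycle_conjugate[OF G g has_3cyclesD[OF U xyz(1-3) dd] dd] xyz by simp
qed

lemma two_points_avoiding:
  assumes "a \<in> U" "b \<in> U" "c \<in> U" "a \<noteq> b" "b \<noteq> c" "a \<noteq> c"
  obtains q u where "q \<in> U" "u \<in> U" "q \<noteq> p" "u \<noteq> p" "q \<noteq> u"
  using that assms by (cases "a = p"; cases "b = p"; blast)

lemma has_3cycles_union:
  assumes G: "perm_closed G" and U: "has_3cycles G U" and V: "has_3cycles G V"
    and U3: "\<exists>a\<in>U. \<exists>b\<in>U. \<exists>c\<in>U. a \<noteq> b \<and> b \<noteq> c \<and> a \<noteq> c"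
    and V3: "\<exists>a\<in>V. \<exists>b\<in>V. \<exists>c\<in>V. a \<noteq> b \<and> b \<noteq> c \<and> a \<noteq> c"
    and p: "p \<in> U" "p \<in> V"
  shows "has_3cycles G (U \<union> V)"
proof (cases "\<exists>r\<in>U \<inter> V. r \<noteq> p")
  case True
  then obtain r where r: "r \<in> U" "r \<in> V" "r \<noteq> p" by blast
  show ?thesis
  proof (rule has_3cycles_star[OF G, of p _ r])
    fix x assume x: "x \<in> U \<union> V" "x \<noteq> p" "x \<noteq> r"
    show "cycle_of_list [p, r, x] \<in> G"
    proof (cases "x \<in> U")
      case True thus ?thesis using has_3cyclesD[OF U p(1) r(1) True] r x by auto
    next
      case False hence "x \<in> V" using x by blast
      thus ?thesis using has_3cyclesD[OF V p(2) r(2)] r x by auto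
    qed
  qed (use p r in auto)
next
  case False
  \<comment> \<open>the sets meet only in \<open>p\<close>: a 3-cycle \<open>[p, x, r]\<close> in \<open>V\<close> moves \<open>[q, u, p]\<close> to \<open>[q, u, x]\<close>\<close>
  from U3 obtain a b c where "a \<in> U" "b \<in> U" "c \<in> U" "a \<noteq> b" "b \<noteq> c" "a \<noteq> c" by blast
  then obtain q u where qu: "q \<in> U" "u \<in> U" "q \<noteq> p" "u \<noteq> p" "q \<noteq> u"
    by (rule two_points_avoiding)
  show ?thesis
  proof (rule has_3cycles_star[OF G, of q _ u])
    fix x assume x: "x \<in> U \<union> V" "x \<noteq> q" "x \<noteq> u"
    show "cycle_of_list [q, u, x] \<in> G"
    proof (cases "x \<in> U")
      case True thus ?thesis using has_3cyclesD[OF U qu(1,2) True] qu x by auto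
    next
      case xU: False
      hence xV: "x \<in> V" "x \<noteq> p" using x p by auto
      from V3 obtain a b c where "a \<in> V" "b \<in> V" "c \<in> V" "a \<noteq> b" "b \<noteq> c" "a \<noteq> c" by blast
      then obtain r1 r2 where "r1 \<in> V" "r2 \<in> V" "r1 \<noteq> p" "r2 \<noteq> p" "r1 \<noteq> r2"
        by (rule two_points_avoiding)
      then obtain r where r: "r \<in> V" "r \<noteq> p" "r \<noteq> x" by blast
      have "r \<notin> U" using r False by blast
      hence "q \<notin> {p, x, r}" "u \<notin> {p, x, r}" using qu xU by auto
      moreover have pxr: "p \<noteq> x" "x \<noteq> r" "p \<noteq> r" using xV r by auto
      ultimately have moved: "map (cycle_of_list [p, x, r]) [q, u, p] = [q, u, x]"
        by (simp add: three_cycle_apply[OF pxr])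
      have qup: "q \<noteq> u" "u \<noteq> p" "q \<noteq> p" using qu by auto
      have "cycle_of_list [p, x, r] \<in> G" by (rule has_3cyclesD[OF V p(2) xV(1) r(1) pxr])
      from three_cycle_conjugate[OF G this has_3cyclesD[OF U qu(1,2) p(1) qup] qup]
      show ?thesis using moved by simp
    qed
  qed (use qu in auto)
qed







lemma permutes_invariant_subset:
  assumes g: "g permutes S" and fin: "finite S" and US: "U \<subseteq> S" and sub: "g ` U \<subseteq> U"
  shows "g z \<in> U \<longleftrightarrow> z \<in> U"
proof -
  have inj: "inj g" using g permutes_inj by blast
  have fU: "finite U" using fin US finite_subset by blast
  have "card (g ` U) = card U" using inj by (simp add: card_image inj_on_subset)
  hence eq: "g ` U = U" using sub fU by (simp add: card_subset_eq)
  show ?thesis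
  proof
    assume "g z \<in> U"
    hence "g z \<in> g ` U" using eq by simp
    thus "z \<in> U" using inj by (auto dest: injD)
  next
    assume "z \<in> U" thus "g z \<in> U" using sub by blast
  qed
qed

lemma commutator_3cycle:
  assumes s: "bij s" and t: "bij t"
    and supp: "\<And>z. s z \<noteq> z \<Longrightarrow> t z \<noteq> z \<Longrightarrow> z = x" and sx: "s x \<noteq> x" and tx: "t x \<noteq> x"
  shows "s \<circ> t \<circ> inv' s \<circ> inv' t = cycle_of_list [x, s x, t x]"
proof -
  have sinj: "s y = s z \<longleftrightarrow> y = z" and tinj: "t y = t z \<longleftrightarrow> y = z" for y z
    using inj_eq[OF bij_is_inj[OF s]] inj_eq[OF bij_is_inj[OF t]] by blast+
  \<comment> \<open>\<open>s x\<close> lies in the support of \<open>s\<close> only, \<open>t x\<close> in that of \<open>t\<close> only\<close>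
  have t_sx: "t (s x) = s x" using supp[of "s x"] sinj sx by auto
  have s_tx: "s (t x) = t x" using supp[of "t x"] tinj tx by auto
  have d: "s x \<noteq> t x" using t_sx tinj tx by metis
  let ?c = "cycle_of_list [x, s x, t x]"
  have c: "?c w = (if w = x then s x else if w = s x then t x else if w = t x then x else w)" for w
    using sx tx d by (intro three_cycle_apply) auto
  have key: "s (t z) = ?c (t (s z))" for z
  proof (cases "z = x")
    case True thus ?thesis using c t_sx s_tx sx by simp
  next
    case False
    consider (s_moves) "s z \<noteq> z" | (t_moves) "t z \<noteq> z" | (fixed) "s z = z" "t z = z" by blast
    thus ?thesis
    proof cases
      case s_moves
      hence tz: "t z = z" using supp False by blast
      have "s (s z) \<noteq> s z" using sinj s_moves by simp
      hence "s z = x \<or> t (s z) = s z" using supp by blast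
      moreover have "s z \<noteq> s x" "s z \<noteq> t x" using sinj False s_tx \<open>s (s z) \<noteq> s z\<close> by metis+
      ultimately show ?thesis using c tz sx tx d t_sx by auto
    next
      case t_moves
      hence sz: "s z = z" using supp False by blast
      have "t (t z) \<noteq> t z" using tinj t_moves by simp
      hence "t z = x \<or> s (t z) = t z" using supp by blast
      moreover have "t z \<noteq> t x" "t z \<noteq> s x" using tinj False t_sx \<open>t (t z) \<noteq> t z\<close> by metis+
      ultimately show ?thesis using c sz by auto
    next
      case fixed
      hence "z \<noteq> s x" "z \<noteq> t x" using sinj tinj False by metis+
      thus ?thesis using c fixed False by simp
    qed
  qed
  have "s \<circ> t = ?c \<circ> (t \<circ> s)" using key by (simp add: fun_eq_iff)
  hence "s \<circ> t \<circ> inv' s \<circ> inv' t = ?c \<circ> (t \<circ> (s \<circ> inv' s) \<circ> inv' t)" by (simp add: comp_assoc)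
  also have "t \<circ> (s \<circ> inv' s) \<circ> inv' t = id"
    using bij_is_surj[OF s] bij_is_surj[OF t] by (simp add: surj_iff)
  finally show ?thesis by (simp only: comp_id)
qed

lemma extend_to_permutation:
  assumes fin: "finite S" and D: "D \<subseteq> S" and fD: "f ` D \<subseteq> S" and inj: "inj_on f D"
  shows "\<exists>\<rho>. \<rho> permutes S \<and> (\<forall>i\<in>D. \<rho> i = f i)"
proof -
  have cD: "card (f ` D) = card D" using inj by (simp add: card_image)
  have fin1: "finite (S - D)" "finite (S - f ` D)" using fin by auto
  have "card (S - D) = card (S - f ` D)"
    using cD D fD fin by (simp add: card_Diff_subset finite_subset)
  then obtain g where g: "bij_betw g (S - D) (S - f ` D)" using finite_same_card_bij fin1 by blast
  define \<rho> where "\<rho> i = (if i \<in> D then f i else if i \<in> S then g i else i)" for i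
  have b1: "bij_betw \<rho> D (f ` D)"
    using inj by (auto simp: bij_betw_def \<rho>_def inj_on_def)
  have b2: "bij_betw \<rho> (S - D) (S - f ` D)"
    using g by (rule bij_betw_cong[THEN iffD1, rotated]) (auto simp: \<rho>_def)
  have "bij_betw \<rho> (D \<union> (S - D)) (f ` D \<union> (S - f ` D))"
    by (rule bij_betw_combine[OF b1 b2]) auto
  moreover have "D \<union> (S - D) = S" "f ` D \<union> (S - f ` D) = S" using D fD by auto
  ultimately have "bij_betw \<rho> S S" by simp
  hence "\<rho> permutes S" by (rule bij_imp_permutes) (auto simp: \<rho>_def D[THEN subsetD])
  thus ?thesis by (auto simp: \<rho>_def)
qed

lemma common_exponent:
  assumes fin: "finite S"
  shows "\<exists>M. M > 0 \<and> even M \<and> (\<forall>\<rho>. \<rho> permutes S \<longrightarrow> \<rho> ^^ M = id)"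
proof -
  define PS where "PS = {p. p permutes S}"
  have fPS: "finite PS" using finite_permutations[OF fin] by (simp add: PS_def)
  define ord where "ord p = (SOME n. p ^^ n = id \<and> n > 0)" for p :: "'a \<Rightarrow> 'a"
  have ord: "p ^^ ord p = id \<and> ord p > 0" if "p \<in> PS" for p
  proof -
    have "permutation p" using that fin by (auto simp: PS_def permutation_permutes)
    then obtain n where "p ^^ n = id" "n > 0" by (rule permutation_is_nilpotent)
    thus ?thesis unfolding ord_def using someI_ex[of "\<lambda>n. p ^^ n = id \<and> n > 0"] by blast
  qed
  define M where "M = 2 * (\<Prod>p\<in>PS. ord p)"
  have pos: "(\<Prod>p\<in>PS. ord p) > 0" using ord by (simp add: prod_pos)
  have "\<rho> ^^ M = id" if "\<rho> permutes S" for \<rho>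
  proof -
    have r: "\<rho> \<in> PS" using that by (simp add: PS_def)
    have "(\<Prod>p\<in>PS. ord p) = ord \<rho> * (\<Prod>p\<in>PS - {\<rho>}. ord p)"
      using fPS r by (simp add: prod.remove)
    hence "M = ord \<rho> * (2 * (\<Prod>p\<in>PS - {\<rho>}. ord p))" by (simp add: M_def)
    hence "\<rho> ^^ M = (\<rho> ^^ ord \<rho>) ^^ (2 * (\<Prod>p\<in>PS - {\<rho>}. ord p))" by (simp add: funpow_mult)
    thus ?thesis using ord[OF r] by (simp add: id_funpow)
  qed
  thus ?thesis using pos by (intro exI[of _ M]) (auto simp: M_def)
qed

text \<open>Permutations with disjoint supports commute, so powers distribute over their product.\<close>

lemma power_of_disjoint_product:
  assumes f: "f permutes S" and g: "g permutes T" and d: "S \<inter> T = {}"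
  shows "(f \<circ> g) ^^ n = f ^^ n \<circ> g ^^ n"
proof -
  have commute: "f (g z) = g (f z)" for z
  proof (cases "z \<in> S")
    case True
    hence "z \<notin> T" "f z \<notin> T" using d permutes_in_image[OF f] by auto
    thus ?thesis using permutes_not_in[OF g] by simp
  next
    case False
    moreover have "g z \<notin> S" using False d permutes_in_image[OF g] permutes_not_in[OF g] by (cases "z \<in> T") auto
    ultimately show ?thesis using permutes_not_in[OF f] by simp
  qed
  have swap: "g ((f ^^ m) z) = (f ^^ m) (g z)" for m z
    by (induct m arbitrary: z) (auto simp: commute[symmetric])
  show ?thesis by (induct n) (auto simp: fun_eq_iff swap)
qed

lemma odd_cycle_even:
  assumes "distinct cs" "odd (length cs)"
  shows "evenperm (cycle_of_list cs)"
proof -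
  have "swapidseq (length cs - 1) (cycle_of_list cs)"
    using swapidseq_ext_of_cycles[OF assms(1)] by (rule swapidseq_ext_imp_swapidseq)
  moreover have "even (length cs - 1)" using assms(2) by (cases "length cs") auto
  ultimately have "evenperm (cycle_of_list cs) = True" by (intro evenperm_unique) auto
  thus ?thesis by simp
qed

lemma cycle_power_nth:
  assumes "distinct cs" "i < length cs"
  shows "(cycle_of_list cs ^^ n) (cs ! i) = cs ! ((i + n) mod length cs)"
proof -
  have "map (cycle_of_list cs ^^ n) cs = rotate n cs" by (rule cyclic_rotation[OF assms(1)])
  hence "(cycle_of_list cs ^^ n) (cs ! i) = rotate n cs ! i" using assms(2) by (metis nth_map)
  thus ?thesis using assms(2) by (simp add: nth_rotate add.commute)
qed

lemma cycle_power_outside: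
  assumes "z \<notin> set cs" shows "(cycle_of_list cs ^^ n) z = z"
  using permutes_not_in[OF permutes_funpow[OF cycle_permutes] assms] .

lemma transpose_pow_even:
  assumes "even n" shows "transpose u v ^^ n = id"
proof -
  obtain j where n: "n = 2 * j" using assms by blast
  have "transpose u v ^^ 2 = id" by (simp add: numeral_2_eq_2 fun_eq_iff)
  thus ?thesis unfolding n by (simp add: funpow_mult[symmetric] id_funpow)
qed

lemma follow_list_closed:
  assumes step: "\<And>i. Suc i < length xs \<Longrightarrow> g (xs ! i) = xs ! Suc i"
    and closed: "\<And>z. z \<in> U \<Longrightarrow> g z \<in> U" and start: "xs \<noteq> []" "xs ! 0 \<in> U"
  shows "set xs \<subseteq> U"
proof -
  have "xs ! i \<in> U" if "i < length xs" for i
    using that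
  proof (induct i)
    case (Suc i) thus ?case using closed step by (metis Suc_lessD)
  qed (use start in simp)
  thus ?thesis by (auto simp: in_set_conv_nth)
qed

lemma generate_alt_subgroup:
  assumes "Xg \<subseteq> carrier (alt_group k)"
  shows "subgroup (generate (alt_group k) Xg) (alt_group k)"
  using group.generate_is_subgroup[OF alt_group_is_group assms] .

lemma generate_alt_permutes:
  assumes "Xg \<subseteq> carrier (alt_group k)" "p \<in> generate (alt_group k) Xg"
  shows "p permutes {1..k}"
  using subgroup.subset[OF generate_alt_subgroup[OF assms(1)]] assms(2) by (auto simp: alt_group_carrier)

lemma generate_alt_id:
  assumes "Xg \<subseteq> carrier (alt_group k)"
  shows "id \<in> generate (alt_group k) Xg"
  using subgroup.one_closed[OF generate_alt_subgroup[OF assms]] by (simp add: alt_group_one)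

lemma perm_closed_generate:
  assumes Xg: "Xg \<subseteq> carrier (alt_group k)"
  shows "perm_closed (generate (alt_group k) Xg)"
  unfolding perm_closed_def
proof (intro conjI ballI)
  have sg: "subgroup (generate (alt_group k) Xg) (alt_group k)" by (rule generate_alt_subgroup[OF Xg])
  fix f g assume "f \<in> generate (alt_group k) Xg" "g \<in> generate (alt_group k) Xg"
  thus "f \<circ> g \<in> generate (alt_group k) Xg"
    using subgroup.m_closed[OF sg] by (simp add: alt_group_mult)
next
  have sg: "subgroup (generate (alt_group k) Xg) (alt_group k)" by (rule generate_alt_subgroup[OF Xg])
  fix f assume f: "f \<in> generate (alt_group k) Xg"
  have fc: "f \<in> carrier (alt_group k)" using subgroup.subset[OF sg] f by blast
  show "inv' f \<in> generate (alt_group k) Xg"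
    using subgroup.m_inv_closed[OF sg f] alt_group_inv_equality[OF fc] by simp
  show "bij f" using generate_alt_permutes[OF Xg f] by (rule permutes_bij)
qed

lemma perm_closed_funpow:
  assumes "perm_closed G" "id \<in> G" "f \<in> G" shows "f ^^ n \<in> G"
  using assms by (induct n) (auto intro: perm_closed_comp)

lemma alt_group_from_3cycles:
  assumes Xg: "Xg \<subseteq> carrier (alt_group k)" and A: "has_3cycles (generate (alt_group k) Xg) {1..k}"
  shows "generate (alt_group k) Xg = carrier (alt_group k)"
proof -
  interpret A: group "alt_group k" by (rule alt_group_is_group)
  have sg: "subgroup (generate (alt_group k) Xg) (alt_group k)"
    by (rule A.generate_is_subgroup[OF Xg])
  have "three_cycles k \<subseteq> generate (alt_group k) Xg"
  proof
    fix p assume "p \<in> three_cycles k"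
    then obtain cs where cs: "p = cycle_of_list cs" "distinct cs" "length cs = 3" "set cs \<subseteq> {1..k}"
      by auto
    have "cs = [cs ! 0, cs ! 1, cs ! 2]" by (rule stupid_lemma[OF cs(3)])
    then obtain x y z where xyz: "cs = [x, y, z]" by metis
    show "p \<in> generate (alt_group k) Xg"
      using has_3cyclesD[OF A, of x y z] cs xyz by auto
  qed
  hence "generate (alt_group k) (three_cycles k) \<subseteq> generate (alt_group k) Xg"
    using A.generate_subgroup_incl[OF _ sg] by blast
  hence "carrier (alt_group k) \<subseteq> generate (alt_group k) Xg"
    using alt_group_carrier_as_three_cycles by blast
  thus ?thesis using subgroup.subset[OF sg] by blast
qed

text \<open>Proof: a maximal set
  \<open>U \<supseteq> {x, y, z}\<close> on which the group contains all 3-cycles absorbs every translate \<open>g U\<close>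
  meeting it, so it is invariant under the generators, hence all of \<open>{1..k}\<close>.\<close>

theorem alt_group_generation_criterion:
  assumes T: "T \<subseteq> carrier (alt_group k)"
    and xyz: "{x, y, z} \<subseteq> {1..k}" "x \<noteq> y" "y \<noteq> z" "x \<noteq> z"
    and c3: "cycle_of_list [x, y, z] \<in> generate (alt_group k) T"
    and anchor: "\<And>t. t \<in> T \<Longrightarrow> \<exists>u\<in>{x, y, z}. t u \<in> {x, y, z}"
    and transitive: "\<And>U. x \<in> U \<Longrightarrow> (\<And>t w. t \<in> T \<Longrightarrow> t w \<in> U \<longleftrightarrow> w \<in> U) \<Longrightarrow> {1..k} \<subseteq> U"
  shows "generate (alt_group k) T = carrier (alt_group k)"
proof -
  define G where "G = generate (alt_group k) T"
  have Gc: "perm_closed G" unfolding G_def by (rule perm_closed_generate[OF T])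
  have Gperm: "g permutes {1..k}" if "g \<in> G" for g using generate_alt_permutes[OF T] that by (simp add: G_def)
  define V0 where "V0 = {x, y, z}"
  have V0: "has_3cycles G V0"
    unfolding V0_def by (rule has_3cycles_triangle[OF Gc xyz(2-4) c3[folded G_def]])
  define Us where "Us = {U. V0 \<subseteq> U \<and> U \<subseteq> {1..k} \<and> has_3cycles G U}"
  have "V0 \<in> Us" using V0 xyz(1) by (simp add: Us_def V0_def)
  moreover have "\<forall>U. U \<in> Us \<longrightarrow> card U < Suc k"
    using card_mono[of "{1..k}"] by (auto simp: Us_def less_Suc_eq_le)
  ultimately obtain U where U: "U \<in> Us" and Umax: "\<And>U'. U' \<in> Us \<Longrightarrow> card U' \<le> card U"
    using ex_has_greatest_nat[of "\<lambda>U. U \<in> Us" V0 card "Suc k"] by blast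
  have Uk: "U \<subseteq> {1..k}" and V0U: "V0 \<subseteq> U" and UA: "has_3cycles G U" using U by (auto simp: Us_def)
  have absorb: "g ` U \<subseteq> U" if g: "g \<in> G" and u: "u \<in> U" "g u \<in> U" for g u
  proof -
    have gp: "g permutes {1..k}" by (rule Gperm[OF g])
    have inj: "inj_on g U" using permutes_inj[OF gp] by (rule inj_on_subset) simp
    have "has_3cycles G (U \<union> g ` U)"
    proof (rule has_3cycles_union[OF Gc UA has_3cycles_image[OF Gc g UA] _ _ u(2)])
      show "\<exists>a\<in>U. \<exists>b\<in>U. \<exists>c\<in>U. a \<noteq> b \<and> b \<noteq> c \<and> a \<noteq> c"
        using V0U xyz(2-4) unfolding V0_def by blast
      show "\<exists>a\<in>g ` U. \<exists>b\<in>g ` U. \<exists>c\<in>g ` U. a \<noteq> b \<and> b \<noteq> c \<and> a \<noteq> c"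
        using V0U xyz(2-4) inj unfolding V0_def
        by (intro bexI[of _ "g x"] bexI[of _ "g y"] bexI[of _ "g z"]) (auto simp: inj_on_eq_iff)
    qed (use u in auto)
    moreover have "g ` U \<subseteq> {1..k}" using Uk permutes_in_image[OF gp] by auto
    ultimately have "U \<union> g ` U \<in> Us" using Uk V0U by (auto simp: Us_def)
    hence "card (U \<union> g ` U) \<le> card U" by (rule Umax)
    moreover have "finite (U \<union> g ` U)" using Uk \<open>g ` U \<subseteq> {1..k}\<close> by (auto intro: finite_subset)
    moreover have "card U \<le> card (U \<union> g ` U)" using \<open>finite (U \<union> g ` U)\<close> by (rule card_mono) auto
    ultimately have "U \<union> g ` U = U" using card_subset_eq[of "U \<union> g ` U" U] by auto
    thus ?thesis by blast
  qed
  have "{1..k} \<subseteq> U"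
  proof (rule transitive)
    show "x \<in> U" using V0U by (simp add: V0_def)
    fix t w assume t: "t \<in> T"
    have tG: "t \<in> G" using t by (auto simp: G_def intro: generate.incl)
    obtain u where "u \<in> V0" "t u \<in> V0" using anchor[OF t] by (auto simp: V0_def)
    hence "t ` U \<subseteq> U" using absorb[OF tG] V0U by blast
    thus "t w \<in> U \<longleftrightarrow> w \<in> U" using permutes_invariant_subset[OF Gperm[OF tG] _ Uk] by simp
  qed
  hence "has_3cycles G {1..k}" using UA Uk by (metis subset_antisym)
  thus ?thesis using alt_group_from_3cycles[OF T] by (simp add: G_def)
qed

text \<open>Two cycles of odd length \<open>P\<close> on the points \<open>N, N + 1, \<dots>, N + 2P - 2\<close>, meeting exactly in
  \<open>N + 1\<close>; the first one also passes through \<open>N\<close>.\<close>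

definition gadget_A :: "nat \<Rightarrow> nat \<Rightarrow> nat list" where
  "gadget_A N P = [Suc N..<N + P] @ [N]"

definition gadget_B :: "nat \<Rightarrow> nat \<Rightarrow> nat list" where
  "gadget_B N P = Suc N # [N + P..<N + 2 * P - 1]"

lemma gadget_lists:
  assumes "2 \<le> P"
  shows "length (gadget_A N P) = P" "length (gadget_B N P) = P"
    and "distinct (gadget_A N P)" "distinct (gadget_B N P)"
    and "set (gadget_A N P) = {N..<N + P}" "set (gadget_B N P) = insert (Suc N) {N + P..<N + 2 * P - 1}"
    and "\<And>i. i < P - 1 \<Longrightarrow> gadget_A N P ! i = Suc N + i" "gadget_A N P ! (P - 1) = N"
    and "gadget_B N P ! 0 = Suc N" "\<And>i. 0 < i \<Longrightarrow> i < P \<Longrightarrow> gadget_B N P ! i = N + P - 1 + i"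
  using assms by (auto simp: gadget_A_def gadget_B_def nth_append nth_Cons')

lemma power_of_disjoint_triple:
  assumes \<rho>: "\<rho> permutes R" and \<kappa>: "\<kappa> permutes K" and \<epsilon>: "\<epsilon> permutes E"
    and d: "R \<inter> K = {}" "R \<inter> E = {}" "K \<inter> E = {}"
    and id: "\<rho> ^^ M = id" "\<epsilon> ^^ M = id"
  shows "(\<rho> \<circ> \<kappa> \<circ> \<epsilon>) ^^ M = \<kappa> ^^ M"
proof -
  have "\<kappa> \<circ> \<epsilon> permutes K \<union> E"
    by (intro permutes_compose permutes_subset[OF \<kappa>] permutes_subset[OF \<epsilon>]) auto
  hence "(\<rho> \<circ> \<kappa> \<circ> \<epsilon>) ^^ M = \<rho> ^^ M \<circ> (\<kappa> \<circ> \<epsilon>) ^^ M"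
    unfolding comp_assoc by (rule power_of_disjoint_product[OF \<rho>]) (use d in auto)
  also have "(\<kappa> \<circ> \<epsilon>) ^^ M = \<kappa> ^^ M \<circ> \<epsilon> ^^ M" using d by (intro power_of_disjoint_product[OF \<kappa> \<epsilon>])
  finally show ?thesis by (simp only: id id_comp comp_id)
qed

lemma cycle_powers_commutator:
  assumes dA: "distinct As" and dB: "distinct Bs" and x: "As ! 0 = x" "Bs ! 0 = x"
    and meet: "set As \<inter> set Bs = {x}" and M: "0 < M" "M < length As" "M < length Bs"
  defines "s \<equiv> cycle_of_list As ^^ M" and "t \<equiv> cycle_of_list Bs ^^ M"
  shows "s \<circ> t \<circ> inv' s \<circ> inv' t = cycle_of_list [x, As ! M, Bs ! M]"
proof -
  have ne: "As \<noteq> []" "Bs \<noteq> []" using M by auto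
  hence sx: "s x = As ! M" and tx: "t x = Bs ! M"
    using cycle_power_nth[OF dA, of 0 M] cycle_power_nth[OF dB, of 0 M] x M by (simp_all add: s_def t_def)
  have "As ! M \<noteq> As ! 0" "Bs ! M \<noteq> Bs ! 0" using nth_eq_iff_index_eq[OF dA, of M 0] nth_eq_iff_index_eq[OF dB, of M 0] M ne by auto
  moreover have "s \<circ> t \<circ> inv' s \<circ> inv' t = cycle_of_list [x, s x, t x]"
  proof (rule commutator_3cycle)
    show "bij s" "bij t" unfolding s_def t_def
      by (rule permutes_bij[OF permutes_funpow[OF cycle_permutes]])+
    fix z assume "s z \<noteq> z" "t z \<noteq> z"
    hence "z \<in> set As" "z \<in> set Bs" using cycle_power_outside unfolding s_def t_def by metis+
    thus "z = x" using meet by blast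
  qed (use sx tx x calculation in auto)
  ultimately show ?thesis using sx tx by simp
qed


text \<open>On \<open>{1..deg}\<close> put
  \<open>\<tau> a = \<rho> a \<circ> \<kappa>\<^sub>A \<circ> \<epsilon> a\<close>, \<open>\<tau> b = \<rho> b \<circ> \<kappa>\<^sub>B \<circ> \<epsilon> b\<close> and \<open>\<tau> c = \<rho> c \<circ> \<epsilon> c\<close> otherwise, where \<open>\<kappa>\<^sub>A\<close>, \<open>\<kappa>\<^sub>B\<close> are the
  two gadget cycles and \<open>\<epsilon> c\<close> is a transposition, inside the other gadget cycle, correcting the
  parity of \<open>\<rho> c\<close>. All factors have disjoint supports, so \<open>\<tau> a ^^ M = \<kappa>\<^sub>A ^^ M\<close> and
  \<open>\<tau> b ^^ M = \<kappa>\<^sub>B ^^ M\<close>, whose commutator is a 3-cycle.\<close>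

locale alternating_gadget =
  fixes B :: "'c set" and a b :: 'c and N M :: nat and \<rho> :: "'c \<Rightarrow> nat \<Rightarrow> nat"
  assumes ab: "a \<in> B" "b \<in> B" "a \<noteq> b" and N: "1 \<le> N"
    and \<rho>: "\<And>c. c \<in> B \<Longrightarrow> \<rho> c permutes {1..N}" and \<rho>a: "\<rho> a N = N"
    and M: "0 < M" "even M" "\<And>\<sigma>. \<sigma> permutes {1..N} \<Longrightarrow> \<sigma> ^^ M = id"
begin

definition len :: nat where "len = 2 * M + 5"
definition deg :: nat where "deg = N + 2 * len - 2"
definition As :: "nat list" where "As = gadget_A N len"
definition Bs :: "nat list" where "Bs = gadget_B N len"

definition \<kappa> :: "'c \<Rightarrow> nat \<Rightarrow> nat" where
  "\<kappa> c = (if c = a then cycle_of_list As else if c = b then cycle_of_list Bs else id)"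
definition Kset :: "'c \<Rightarrow> nat set" where
  "Kset c = (if c = a then set As else if c = b then set Bs else {})"

definition Eset :: "'c \<Rightarrow> nat set" where
  "Eset c = (if c = b then {N + M + 2, N + M + 3} else {N + len + M, N + len + M + 1})"
definition \<epsilon> :: "'c \<Rightarrow> nat \<Rightarrow> nat" where
  "\<epsilon> c = (if evenperm (\<rho> c) then id
     else if c = b then transpose (N + M + 2) (N + M + 3) else transpose (N + len + M) (N + len + M + 1))"

definition \<tau> :: "'c \<Rightarrow> nat \<Rightarrow> nat" where "\<tau> c = \<rho> c \<circ> \<kappa> c \<circ> \<epsilon> c"

lemma len: "M + 4 \<le> len" "odd len" "2 \<le> len"
  by (auto simp: len_def)

lemmas lists = gadget_lists[OF len(3), where N = N, folded As_def Bs_def]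

lemma set_As: "set As = {N..<N + len}" and set_Bs: "set Bs = insert (Suc N) {N + len..<N + 2 * len - 1}"
  using lists by auto

lemma \<kappa>_perm: "\<kappa> c permutes Kset c"
  by (simp add: \<kappa>_def Kset_def cycle_permutes permutes_id)

lemma \<kappa>_even: "evenperm (\<kappa> c)" and \<kappa>_permutation: "permutation (\<kappa> c)"
  using lists(1-4) len(2) odd_cycle_even[of As] odd_cycle_even[of Bs]
  by (simp_all add: \<kappa>_def permutation_of_cycle)

lemma \<epsilon>_perm: "\<epsilon> c permutes Eset c" and \<epsilon>_parity: "evenperm (\<epsilon> c) = evenperm (\<rho> c)"
  and \<epsilon>_permutation: "permutation (\<epsilon> c)" and \<epsilon>_power: "\<epsilon> c ^^ M = id"
  using M(2) by (auto simp: \<epsilon>_def Eset_def permutes_swap_id permutes_id evenperm_swap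
      permutation_swap_id transpose_pow_even)

lemma supports: "({1..N} - {N}) \<inter> Kset c = {}" "c \<noteq> a \<Longrightarrow> {1..N} \<inter> Kset c = {}"
    "{1..N} \<inter> Eset c = {}" "Kset c \<inter> Eset c = {}"
  and supports_deg: "{1..N} \<subseteq> {1..deg}" "Kset c \<subseteq> {1..deg}" "Eset c \<subseteq> {1..deg}"
  using len N ab(3) by (auto simp: Kset_def Eset_def set_As set_Bs deg_def)

lemma \<tau>_alt: "c \<in> B \<Longrightarrow> \<tau> c \<in> carrier (alt_group deg)"
proof -
  assume c: "c \<in> B"
  have "\<tau> c permutes {1..deg}" unfolding \<tau>_def
    by (intro permutes_compose permutes_subset[OF \<rho>[OF c]] permutes_subset[OF \<kappa>_perm]
        permutes_subset[OF \<epsilon>_perm] supports_deg)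
  moreover have "permutation (\<rho> c)" using \<rho>[OF c] by (auto simp: permutation_permutes)
  hence "evenperm (\<tau> c)" unfolding \<tau>_def
    using \<kappa>_even \<epsilon>_parity \<kappa>_permutation \<epsilon>_permutation
    by (simp add: evenperm_comp permutation_compose)
  ultimately show ?thesis by (simp add: alt_group_carrier)
qed

lemma \<tau>_outside: "z \<notin> Kset c \<Longrightarrow> z \<notin> Eset c \<Longrightarrow> \<tau> c z = \<rho> c z"
  using permutes_not_in[OF \<kappa>_perm] permutes_not_in[OF \<epsilon>_perm] by (simp add: \<tau>_def)

lemma \<tau>_below: "z < N \<Longrightarrow> \<tau> c z = \<rho> c z"
  using len by (intro \<tau>_outside) (auto simp: Kset_def Eset_def set_As set_Bs)

lemma \<tau>_fixes: "c \<in> B \<Longrightarrow> N < z \<Longrightarrow> z \<notin> Kset c \<Longrightarrow> z \<notin> Eset c \<Longrightarrow> \<tau> c z = z"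
  using \<tau>_outside permutes_not_in[OF \<rho>] by simp

lemma \<tau>_power: "\<tau> a ^^ M = cycle_of_list As ^^ M" "\<tau> b ^^ M = cycle_of_list Bs ^^ M"
proof -
  have \<rho>a': "\<rho> a permutes {1..N} - {N}"
    by (rule permutes_superset[OF \<rho>[OF ab(1)]]) (use \<rho>a in auto)
  have "\<tau> a ^^ M = \<kappa> a ^^ M"
    unfolding \<tau>_def using supports(1,3,4)[of a] M(3)[OF \<rho>[OF ab(1)]] \<epsilon>_power
    by (intro power_of_disjoint_triple[OF \<rho>a' \<kappa>_perm \<epsilon>_perm]) auto
  thus "\<tau> a ^^ M = cycle_of_list As ^^ M" by (simp add: \<kappa>_def)
  have "\<tau> b ^^ M = \<kappa> b ^^ M"
    unfolding \<tau>_def using supports(2-4)[of b] ab(3) M(3)[OF \<rho>[OF ab(2)]] \<epsilon>_power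
    by (intro power_of_disjoint_triple[OF \<rho>[OF ab(2)] \<kappa>_perm \<epsilon>_perm]) auto
  thus "\<tau> b ^^ M = cycle_of_list Bs ^^ M" using ab(3) by (simp add: \<kappa>_def)
qed

lemma gadget_points: "As ! 0 = Suc N" "Bs ! 0 = Suc N" "As ! M = Suc N + M" "Bs ! M = N + len - 1 + M"
  using lists(7,9,10) len M(1) by auto

lemma three_cycle_generated:
  "cycle_of_list [Suc N, Suc N + M, N + len - 1 + M] \<in> generate (alt_group deg) (\<tau> ` B)"
proof -
  define G where "G = generate (alt_group deg) (\<tau> ` B)"
  have T: "\<tau> ` B \<subseteq> carrier (alt_group deg)" using \<tau>_alt by auto
  have Gc: "perm_closed G" unfolding G_def by (rule perm_closed_generate[OF T])
  have pow: "\<tau> c ^^ M \<in> G" if "c \<in> B" for c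
    using perm_closed_funpow[OF Gc generate_alt_id[OF T, folded G_def]] that
    by (auto simp: G_def intro: generate.incl)
  have "set As \<inter> set Bs = {Suc N}" using len by (auto simp: set_As set_Bs)
  hence "cycle_of_list As ^^ M \<circ> cycle_of_list Bs ^^ M \<circ> inv' (cycle_of_list As ^^ M)
      \<circ> inv' (cycle_of_list Bs ^^ M) = cycle_of_list [Suc N, As ! M, Bs ! M]"
    using lists(1-4) gadget_points(1,2) len M(1) by (intro cycle_powers_commutator) auto
  moreover have "cycle_of_list As ^^ M \<circ> cycle_of_list Bs ^^ M \<circ> inv' (cycle_of_list As ^^ M)
      \<circ> inv' (cycle_of_list Bs ^^ M) \<in> G"
    using pow[OF ab(1)] pow[OF ab(2)] \<tau>_power perm_closed_comp[OF Gc] perm_closed_inv[OF Gc] by metis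
  ultimately show ?thesis using gadget_points by (simp add: G_def)
qed

lemma anchor:
  assumes c: "c \<in> B"
  shows "\<exists>u\<in>{Suc N, Suc N + M, N + len - 1 + M}. \<tau> c u \<in> {Suc N, Suc N + M, N + len - 1 + M}"
proof -
  consider "c = a" | "c = b" | "c \<noteq> a" "c \<noteq> b" by blast
  thus ?thesis
  proof cases
    case 1
    hence "\<tau> c (N + len - 1 + M) = N + len - 1 + M"
      using len M(1) ab(3) by (intro \<tau>_fixes[OF c]) (auto simp: Kset_def Eset_def set_As)
    thus ?thesis by auto
  next
    case 2
    hence "\<tau> c (Suc N + M) = Suc N + M"
      using len M(1) ab(3) by (intro \<tau>_fixes[OF c]) (auto simp: Kset_def Eset_def set_Bs)
    thus ?thesis by auto
  next
    case 3
    hence "\<tau> c (Suc N) = Suc N" using len by (intro \<tau>_fixes[OF c]) (auto simp: Kset_def Eset_def)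
    thus ?thesis by auto
  qed
qed

lemma walk_As: "Suc i < len \<Longrightarrow> \<tau> a (As ! i) = As ! Suc i"
proof -
  assume i: "Suc i < len"
  have "As ! i \<in> Kset a" "As ! Suc i \<in> {N..<N + len}" using i lists(1) set_As by (auto simp: Kset_def)
  hence "\<epsilon> a (As ! i) = As ! i" "\<rho> a (As ! Suc i) = As ! Suc i"
    using permutes_not_in[OF \<epsilon>_perm] supports(4) permutes_not_in[OF \<rho>[OF ab(1)]] \<rho>a
    by (auto, metis atLeastAtMost_iff atLeastLessThan_iff le_antisym not_less_eq_eq)
  moreover have "cycle_of_list As (As ! i) = As ! Suc i"
    using cycle_power_nth[OF lists(3), of i 1] i lists(1) by simp
  ultimately show ?thesis by (simp add: \<tau>_def \<kappa>_def)
qed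

lemma walk_Bs: "Suc i < len \<Longrightarrow> \<tau> b (Bs ! i) = Bs ! Suc i"
proof -
  assume i: "Suc i < len"
  have "Bs ! i \<in> Kset b" using i lists(2) ab(3) by (auto simp: Kset_def)
  hence "\<epsilon> b (Bs ! i) = Bs ! i" using permutes_not_in[OF \<epsilon>_perm] supports(4) by blast
  moreover have "\<rho> b (Bs ! Suc i) = Bs ! Suc i"
    using lists(10)[of "Suc i"] i by (intro permutes_not_in[OF \<rho>[OF ab(2)]]) auto
  moreover have "cycle_of_list Bs (Bs ! i) = Bs ! Suc i"
    using cycle_power_nth[OF lists(4), of i 1] i lists(2) by simp
  ultimately show ?thesis using ab(3) by (simp add: \<tau>_def \<kappa>_def)
qed

text \<open>If the \<open>\<rho> c\<close> act transitively on \<open>{1..N}\<close> (moving only points below \<open>N\<close>), the \<open>\<tau> c\<close> act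
  transitively on \<open>{1..deg}\<close>: from \<open>N + 1\<close> the two cycles reach all gadget points, including \<open>N\<close>.\<close>

lemma transitive:
  assumes transitive: "\<And>U. N \<in> U \<Longrightarrow> (\<And>c z. c \<in> B \<Longrightarrow> z < N \<Longrightarrow> \<rho> c z \<in> U \<longleftrightarrow> z \<in> U) \<Longrightarrow> {1..N} \<subseteq> U"
    and U: "Suc N \<in> U" and closed: "\<And>c w. c \<in> B \<Longrightarrow> \<tau> c w \<in> U \<longleftrightarrow> w \<in> U"
  shows "{1..deg} \<subseteq> U"
proof -
  have "set As \<subseteq> U"
    using walk_As closed[OF ab(1)] lists(1) len gadget_points U
    by (intro follow_list_closed[of As "\<tau> a" U]) auto
  moreover have "set Bs \<subseteq> U"
    using walk_Bs closed[OF ab(2)] lists(2) len gadget_points U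
    by (intro follow_list_closed[of Bs "\<tau> b" U]) auto
  moreover have "{1..N} \<subseteq> U"
  proof (rule transitive)
    show "N \<in> U" using \<open>set As \<subseteq> U\<close> set_As len by auto
  qed (use closed \<tau>_below in metis)
  moreover have "{1..deg} \<subseteq> {1..N} \<union> set As \<union> set Bs"
    using len by (auto simp: set_As set_Bs deg_def)
  ultimately show ?thesis by blast
qed

theorem generates:
  assumes "\<And>U. N \<in> U \<Longrightarrow> (\<And>c z. c \<in> B \<Longrightarrow> z < N \<Longrightarrow> \<rho> c z \<in> U \<longleftrightarrow> z \<in> U) \<Longrightarrow> {1..N} \<subseteq> U"
  shows "generate (alt_group deg) (\<tau> ` B) = carrier (alt_group deg)"
proof (rule alt_group_generation_criterion[OF _ _ _ _ _ three_cycle_generated])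
  show "\<tau> ` B \<subseteq> carrier (alt_group deg)" using \<tau>_alt by auto
  show "{Suc N, Suc N + M, N + len - 1 + M} \<subseteq> {1..deg}" using len by (auto simp: deg_def)
  show "Suc N \<noteq> Suc N + M" "Suc N + M \<noteq> N + len - 1 + M" "Suc N \<noteq> N + len - 1 + M"
    using len M(1) by auto
  show "\<exists>u\<in>{Suc N, Suc N + M, N + len - 1 + M}. t u \<in> {Suc N, Suc N + M, N + len - 1 + M}"
    if "t \<in> \<tau> ` B" for t using that anchor by auto
  show "{1..deg} \<subseteq> U" if "Suc N \<in> U" "\<And>t w. t \<in> \<tau> ` B \<Longrightarrow> t w \<in> U \<longleftrightarrow> w \<in> U" for U
    using transitive[OF assms] that by blast
qed

end


lemma extend_fixing_top:
  assumes "D \<subseteq> {1..m}" "f ` D \<subseteq> {1..m}" "inj_on f D"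
  obtains \<sigma> where "\<sigma> permutes {1..Suc m}" "\<And>i. i \<in> D \<Longrightarrow> \<sigma> i = f i" "\<sigma> (Suc m) = Suc m"
proof -
  obtain \<sigma> where \<sigma>: "\<sigma> permutes {1..m}" "\<forall>i\<in>D. \<sigma> i = f i"
    using extend_to_permutation[OF _ assms] by auto
  show ?thesis
  proof (rule that)
    show "\<sigma> permutes {1..Suc m}" using \<sigma>(1) by (rule permutes_subset) auto
    show "\<sigma> (Suc m) = Suc m" using permutes_not_in[OF \<sigma>(1)] by simp
  qed (use \<sigma> in auto)
qed

lemma extend_with_slot:
  assumes D: "D \<subseteq> {1..m}" "f ` D \<subseteq> {1..m}" "inj_on f D" and q: "q \<in> {1..m}" "q \<notin> D"
  obtains \<sigma> where "\<sigma> permutes {1..Suc m}" "\<And>i. i \<in> D \<Longrightarrow> \<sigma> i = f i" "\<sigma> q = Suc m"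
proof -
  let ?f = "f(q := Suc m)"
  have "?f ` D = f ` D" using q(2) by (auto intro: image_cong)
  moreover have "inj_on ?f D" using D(3) q(2) by (simp add: inj_on_def)
  ultimately have "inj_on ?f (insert q D)" using D(2) q(2) by auto
  moreover have "insert q D \<subseteq> {1..Suc m}" "?f ` insert q D \<subseteq> {1..Suc m}" using D q by auto
  ultimately obtain \<sigma> where \<sigma>: "\<sigma> permutes {1..Suc m}" "\<forall>i\<in>insert q D. \<sigma> i = ?f i"
    using extend_to_permutation[of "{1..Suc m}" "insert q D" ?f] by auto
  show ?thesis by (rule that[OF \<sigma>(1)]) (use \<sigma>(2) q(2) in auto)
qed

lemma extend_partial_action:
  assumes Dsub: "\<And>c. c \<in> B \<Longrightarrow> D c \<subseteq> {1..m}" and Dimg: "\<And>c. c \<in> B \<Longrightarrow> \<pi> c ` D c \<subseteq> {1..m}"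
    and Dinj: "\<And>c. c \<in> B \<Longrightarrow> inj_on (\<pi> c) (D c)"
    and b: "b \<in> B" and q: "q \<in> {1..m}" "q \<notin> D b"
    and conn: "\<And>U. q \<in> U \<Longrightarrow> (\<And>c i. c \<in> B \<Longrightarrow> i \<in> D c \<Longrightarrow> (i \<in> U \<longleftrightarrow> \<pi> c i \<in> U)) \<Longrightarrow> {1..m} \<subseteq> U"
  obtains \<rho> where "\<And>c. c \<in> B \<Longrightarrow> \<rho> c permutes {1..Suc m}"
    and "\<And>c i. c \<in> B \<Longrightarrow> i \<in> D c \<Longrightarrow> \<rho> c i = \<pi> c i"
    and "\<And>c. c \<in> B \<Longrightarrow> c \<noteq> b \<Longrightarrow> \<rho> c (Suc m) = Suc m"
    and "\<And>U. Suc m \<in> U \<Longrightarrow> (\<And>c z. c \<in> B \<Longrightarrow> z < Suc m \<Longrightarrow> \<rho> c z \<in> U \<longleftrightarrow> z \<in> U) \<Longrightarrow> {1..Suc m} \<subseteq> U"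
proof -
  define good where "good c \<sigma> \<longleftrightarrow> \<sigma> permutes {1..Suc m} \<and> (\<forall>i\<in>D c. \<sigma> i = \<pi> c i)
      \<and> (if c = b then \<sigma> q = Suc m else \<sigma> (Suc m) = Suc m)" for c \<sigma>
  have "\<exists>\<sigma>. good c \<sigma>" if c: "c \<in> B" for c
  proof (cases "c = b")
    case True
    obtain \<sigma> where "\<sigma> permutes {1..Suc m}" "\<And>i. i \<in> D b \<Longrightarrow> \<sigma> i = \<pi> b i" "\<sigma> q = Suc m"
      using extend_with_slot[OF Dsub[OF b] Dimg[OF b] Dinj[OF b] q] by blast
    thus ?thesis using True by (auto simp: good_def)
  next
    case False
    obtain \<sigma> where "\<sigma> permutes {1..Suc m}" "\<And>i. i \<in> D c \<Longrightarrow> \<sigma> i = \<pi> c i" "\<sigma> (Suc m) = Suc m"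
      using extend_fixing_top[OF Dsub[OF c] Dimg[OF c] Dinj[OF c]] by blast
    thus ?thesis using False by (auto simp: good_def)
  qed
  hence "\<exists>\<rho>. \<forall>c\<in>B. good c (\<rho> c)" by (intro bchoice) blast
  then obtain \<rho> where "\<forall>c\<in>B. good c (\<rho> c)" ..
  hence \<rho>: "\<rho> c permutes {1..Suc m}" "\<And>i. i \<in> D c \<Longrightarrow> \<rho> c i = \<pi> c i"
    "if c = b then \<rho> c q = Suc m else \<rho> c (Suc m) = Suc m" if "c \<in> B" for c
    using that by (auto simp: good_def)
  have trans: "{1..Suc m} \<subseteq> U"
    if U: "Suc m \<in> U" and closed: "\<And>c z. c \<in> B \<Longrightarrow> z < Suc m \<Longrightarrow> \<rho> c z \<in> U \<longleftrightarrow> z \<in> U" for U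
  proof -
    have "q \<in> U" using closed[OF b, of q] \<rho>(3)[OF b] q U by auto
    hence "{1..m} \<subseteq> U"
    proof (rule conn)
      fix c i assume "c \<in> B" "i \<in> D c"
      moreover have "i < Suc m" using Dsub \<open>c \<in> B\<close> \<open>i \<in> D c\<close> by fastforce
      ultimately show "i \<in> U \<longleftrightarrow> \<pi> c i \<in> U" using closed[of c i] \<rho>(2) by simp
    qed
    thus ?thesis using U by (auto simp: le_Suc_eq)
  qed
  show ?thesis
  proof (rule that)
    show "\<rho> c (Suc m) = Suc m" if "c \<in> B" "c \<noteq> b" for c using \<rho>(3)[OF that(1)] that(2) by simp
  qed (use \<rho>(1,2) trans in auto)
qed

theorem alternating_extension:
  assumes Dsub: "\<And>c. c \<in> B \<Longrightarrow> D c \<subseteq> {1..m}" and Dimg: "\<And>c. c \<in> B \<Longrightarrow> \<pi> c ` D c \<subseteq> {1..m}"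
    and Dinj: "\<And>c. c \<in> B \<Longrightarrow> inj_on (\<pi> c) (D c)"
    and ab: "a \<in> B" "b \<in> B" "a \<noteq> b" and q: "q \<in> {1..m}" "q \<notin> D b"
    and conn: "\<And>U. q \<in> U \<Longrightarrow> (\<And>c i. c \<in> B \<Longrightarrow> i \<in> D c \<Longrightarrow> (i \<in> U \<longleftrightarrow> \<pi> c i \<in> U)) \<Longrightarrow> {1..m} \<subseteq> U"
  shows "\<exists>k \<tau>. (\<forall>c\<in>B. \<tau> c \<in> carrier (alt_group k)) \<and> (\<forall>c\<in>B. \<forall>i\<in>D c. \<tau> c i = \<pi> c i)
              \<and> generate (alt_group k) (\<tau> ` B) = carrier (alt_group k)"
proof -
  obtain \<rho> where \<rho>: "\<And>c. c \<in> B \<Longrightarrow> \<rho> c permutes {1..Suc m}"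
    and \<rho>D: "\<And>c i. c \<in> B \<Longrightarrow> i \<in> D c \<Longrightarrow> \<rho> c i = \<pi> c i"
    and \<rho>top: "\<And>c. c \<in> B \<Longrightarrow> c \<noteq> b \<Longrightarrow> \<rho> c (Suc m) = Suc m"
    and trans: "\<And>U. Suc m \<in> U \<Longrightarrow> (\<And>c z. c \<in> B \<Longrightarrow> z < Suc m \<Longrightarrow> \<rho> c z \<in> U \<longleftrightarrow> z \<in> U) \<Longrightarrow> {1..Suc m} \<subseteq> U"
    using extend_partial_action[where B = B and D = D and \<pi> = \<pi> and m = m and b = b and q = q,
        OF Dsub Dimg Dinj ab(2) q conn] by blast
  obtain M where M: "0 < M" "even M" "\<And>\<sigma>. \<sigma> permutes {1..Suc m} \<Longrightarrow> \<sigma> ^^ M = id"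
    using common_exponent[of "{1..Suc m}"] by auto
  interpret G: alternating_gadget B a b "Suc m" M \<rho>
    using ab \<rho> \<rho>top M by unfold_locales auto
  have "G.\<tau> c i = \<pi> c i" if "c \<in> B" "i \<in> D c" for c i
    using that Dsub G.\<tau>_below \<rho>D by fastforce
  thus ?thesis using G.\<tau>_alt G.generates[OF trans] by blast
qed

lemma (in group) coset_translate_inj:
  assumes "subgroup H G" "P \<in> rcosets H" "P' \<in> rcosets H" "c \<in> carrier G" "P #> c = P' #> c"
  shows "P = P'"
proof -
  have "P \<subseteq> carrier G" "P' \<subseteq> carrier G"
    using assms(2,3) r_coset_subset_G subgroup.subset[OF assms(1)] by (auto simp: RCOSETS_def)
  thus ?thesis using arg_cong[OF assms(5), of "\<lambda>Z. Z #> inv c"] assms(4) by (simp add: coset_mult_assoc)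
qed

text \<open>A finite set of right cosets of \<open>H\<close> that contains \<open>H\<close> and is closed under right translation
  by the inverses of a generating set contains every right coset; in particular \<open>H\<close> has finite
  index. (Translation by \<open>c\<^sup>-\<^sup>1\<close> permutes the finite set, hence also translation by \<open>c\<close> preserves it.)\<close>

lemma (in group) closed_coset_set_is_all:
  assumes H: "subgroup H G" and gen: "B \<subseteq> carrier G" "generate G B = carrier G"
    and Y: "finite Y" "Y \<subseteq> rcosets H" "H \<in> Y"
    and closed: "\<And>c Q. c \<in> B \<Longrightarrow> Q \<in> Y \<Longrightarrow> Q #> inv c \<in> Y"
  shows "rcosets H \<subseteq> Y"
proof -
  have carrier: "Q \<subseteq> carrier G" if "Q \<in> Y" for Q
    using that Y(2) r_coset_subset_G subgroup.subset[OF H] by (auto simp: RCOSETS_def)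
  have closed': "Q #> c \<in> Y" if c: "c \<in> B" and Q: "Q \<in> Y" for c Q
  proof -
    have cG: "c \<in> carrier G" using c gen by auto
    have "inj_on (\<lambda>Q. Q #> inv c) Y"
    proof (rule inj_onI)
      fix P P' assume "P \<in> Y" "P' \<in> Y" "P #> inv c = P' #> inv c"
      thus "P = P'" using coset_translate_inj[OF H _ _ inv_closed[OF cG]] Y(2) by blast
    qed
    hence "(\<lambda>Q. Q #> inv c) ` Y = Y" using Y(1) closed[OF c] by (intro endo_inj_surj) auto
    then obtain Q' where Q': "Q' \<in> Y" "Q = Q' #> inv c" using Q by blast
    thus ?thesis using carrier[OF Q'(1)] cG by (simp add: coset_mult_assoc)
  qed
  have "\<forall>Q\<in>Y. Q #> g \<in> Y" if "g \<in> generate G B" for g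
    using that
  proof induct
    case one thus ?case using carrier by simp
  next
    case (incl h) thus ?case using closed' by auto
  next
    case (inv h) thus ?case using closed by auto
  next
    case (eng g1 g2)
    hence "g1 \<in> carrier G" "g2 \<in> carrier G" using generate_in_carrier[OF gen(1)] by auto
    thus ?case using eng carrier by (simp add: coset_mult_assoc[symmetric])
  qed
  thus ?thesis using gen(2) Y(3) by (auto simp: RCOSETS_def)
qed

lemma hom_fixes_generate:
  assumes G: "group G" and f: "f \<in> hom G (alt_group k)" and S: "S \<subseteq> carrier G"
    and fixed: "\<And>s. s \<in> S \<Longrightarrow> f s p = p"
  shows "g \<in> generate G S \<Longrightarrow> f g p = p"
proof (induct rule: generate.induct)
  interpret f: group_hom G "alt_group k" f
    using G f alt_group_is_group by (simp add: group_hom_def group_hom_axioms_def)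
  case one thus ?case using f.hom_one by (simp add: alt_group_one)
next
  case (incl s) thus ?case by (rule fixed)
next
  interpret f: group_hom G "alt_group k" f
    using G f alt_group_is_group by (simp add: group_hom_def group_hom_axioms_def)
  case (inv s)
  have sG: "s \<in> carrier G" using inv S by auto
  hence fs: "f s \<in> carrier (alt_group k)" by simp
  hence "bij (f s)" using permutes_bij by (auto simp: alt_group_carrier)
  hence "inv' (f s) p = p" using fixed[OF inv] by (metis bij_inv_eq_iff)
  thus ?case using f.hom_inv[OF sG] alt_group_inv_equality[OF fs] by simp
next
  interpret f: group_hom G "alt_group k" f
    using G f alt_group_is_group by (simp add: group_hom_def group_hom_axioms_def)
  case (eng g1 g2)
  hence "g1 \<in> carrier G" "g2 \<in> carrier G" using group.generate_in_carrier[OF G S] by auto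
  thus ?case using eng by (simp add: alt_group_mult)
qed


text \<open>The group acts on right cosets from the left by
  \<open>g \<cdot> P = P #> g\<^sup>-\<^sup>1\<close>; \<open>hcoset g = g \<cdot> H\<close>. The vertices are the cosets met while reading the words of
  \<open>R\<close> from right to left, starting at \<open>H\<close>; the edges labelled \<open>c \<in> B\<close> join \<open>P\<close> to \<open>c \<cdot> P\<close>.\<close>

locale schreier_graph = group F for F (structure) +
  fixes B :: "'a set" and H :: "'a set" and R :: "('a \<times> bool) list set"
  assumes free: "free_basis F B" and subgroup_H: "subgroup H F"
    and finite_R: "finite R" and letters_R: "\<And>r. r \<in> R \<Longrightarrow> set (map fst r) \<subseteq> B"
begin

lemma basis: "B \<subseteq> carrier F" "generate F B = carrier F"
  using free by (auto simp: free_basis_def)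

definition hcoset :: "'a \<Rightarrow> 'a set" where "hcoset g = H #> inv g"

lemma hcoset_one: "hcoset \<one> = H"
  using subgroup.subset[OF subgroup_H] by (simp add: hcoset_def)

lemma hcoset_mult: "c \<in> carrier F \<Longrightarrow> g \<in> carrier F \<Longrightarrow> hcoset (c \<otimes> g) = hcoset g #> inv c"
  using subgroup.subset[OF subgroup_H] by (simp add: hcoset_def inv_mult_group coset_mult_assoc)

lemma hcoset_rcosets: "g \<in> carrier F \<Longrightarrow> hcoset g \<in> rcosets H"
  using subgroup.subset[OF subgroup_H] by (simp add: hcoset_def rcosetsI)

lemma hcoset_carrier: "g \<in> carrier F \<Longrightarrow> hcoset g \<subseteq> carrier F"
  using subgroup.subset[OF subgroup_H] by (simp add: hcoset_def r_coset_subset_G)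

lemma hcoset_eq_H: "g \<in> carrier F \<Longrightarrow> hcoset g = H \<longleftrightarrow> g \<in> H"
  using coset_join1[OF _ inv_closed subgroup_H] coset_join2[OF inv_closed subgroup_H]
    subgroup.m_inv_closed[OF subgroup_H] inv_inv by (metis hcoset_def)

definition tails :: "('a \<times> bool) list set" where "tails = {drop j r |r j. r \<in> R}"

definition visited :: "'a set set" where
  "visited = insert H ((\<lambda>s. hcoset (word_eval F s)) ` tails)"

lemma tails_R: "r \<in> R \<Longrightarrow> r \<in> tails"
  unfolding tails_def by (metis (mono_tags, lifting) drop0 mem_Collect_eq)

lemma tails_Cons: "l # s \<in> tails \<Longrightarrow> s \<in> tails"
proof -
  assume "l # s \<in> tails"
  then obtain r j where r: "r \<in> R" "l # s = drop j r" by (auto simp: tails_def)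
  hence "s = tl (drop j r)" by (metis list.sel(3))
  hence "s = drop (Suc j) r" by (simp add: drop_Suc tl_drop)
  thus "s \<in> tails" using r(1) by (auto simp: tails_def)
qed

lemma letters_tails: "s \<in> tails \<Longrightarrow> set (map fst s) \<subseteq> B"
  using letters_R by (auto simp: tails_def dest: in_set_dropD)

lemma finite_visited: "finite visited"
proof -
  have "tails \<subseteq> (\<Union>r\<in>R. (\<lambda>j. drop j r) ` {..length r})"
  proof
    fix s assume "s \<in> tails"
    then obtain r j where r: "r \<in> R" "s = drop j r" by (auto simp: tails_def)
    hence "s = drop (min j (length r)) r" by (simp add: min_def)
    thus "s \<in> (\<Union>r\<in>R. (\<lambda>j. drop j r) ` {..length r})"
      using r(1) by (intro UN_I[OF r(1)] image_eqI[of _ _ "min j (length r)"]) auto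
  qed
  moreover have "finite (\<Union>r\<in>R. (\<lambda>j. drop j r) ` {..length r})" using finite_R by simp
  ultimately have "finite tails" by (rule finite_subset)
  thus ?thesis by (simp add: visited_def)
qed

lemma tail_visited: "s \<in> tails \<Longrightarrow> hcoset (word_eval F s) \<in> visited"
  by (simp add: visited_def)

lemma tail_closed: "s \<in> tails \<Longrightarrow> word_eval F s \<in> carrier F"
  using letters_tails basis(1) word_eval_closed by (meson subset_trans)

lemma visited_rcosets: "visited \<subseteq> rcosets H"
proof -
  have "H \<in> rcosets H" using hcoset_rcosets[OF one_closed] by (simp add: hcoset_one)
  thus ?thesis using hcoset_rcosets tail_closed by (auto simp: visited_def)
qed

lemma tail_step:
  assumes "(c, bb) # s \<in> tails"
  shows "if bb then hcoset (word_eval F s) = hcoset (word_eval F ((c, bb) # s)) #> inv c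
         else hcoset (word_eval F ((c, bb) # s)) = hcoset (word_eval F s) #> inv c"
proof -
  have c: "c \<in> carrier F" using letters_tails[OF assms] basis(1) by auto
  have g: "word_eval F s \<in> carrier F"
    using letters_tails[OF tails_Cons[OF assms]] basis(1) by (intro word_eval_closed) auto
  show ?thesis
  proof (cases bb)
    case True
    have "hcoset (word_eval F ((c, bb) # s)) = hcoset (word_eval F s) #> c"
      using hcoset_mult[OF inv_closed[OF c] g] c True by simp
    moreover have "hcoset (word_eval F s) \<subseteq> carrier F" by (rule hcoset_carrier[OF g])
    ultimately show ?thesis using True c by (simp add: coset_mult_assoc)
  qed (use hcoset_mult[OF c g] in simp)
qed

lemma free_slot:
  assumes "infinite (rcosets H)"
  obtains b Q where "b \<in> B" "Q \<in> visited" "Q #> inv b \<notin> visited"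
proof -
  have "H \<in> visited" by (simp add: visited_def)
  hence "\<not> (\<forall>c\<in>B. \<forall>Q\<in>visited. Q #> inv c \<in> visited)"
    using closed_coset_set_is_all[OF subgroup_H basis finite_visited visited_rcosets] assms
      finite_subset[OF _ finite_visited] by blast
  thus ?thesis using that by blast
qed

text \<open>The graph is connected: a set of vertices containing one vertex and closed along edges
  contains all of them (follow each tail back to \<open>H\<close>).\<close>

lemma connected:
  assumes Q: "Q \<in> visited" "Q \<in> V"
    and closed: "\<And>c P. c \<in> B \<Longrightarrow> P \<in> visited \<Longrightarrow> P #> inv c \<in> visited \<Longrightarrow> P \<in> V \<longleftrightarrow> P #> inv c \<in> V"
  shows "visited \<subseteq> V"
proof -
  have tail: "hcoset (word_eval F s) \<in> V \<longleftrightarrow> H \<in> V" if "s \<in> tails" for s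
    using that
  proof (induct s)
    case Nil thus ?case by (simp add: hcoset_one)
  next
    case (Cons l s)
    obtain c bb where l: "l = (c, bb)" by (cases l)
    have cB: "c \<in> B" using letters_tails[OF Cons(2)] l by auto
    have s: "s \<in> tails" using tails_Cons[OF Cons(2)] .
    show ?case using tail_step[OF Cons(2)[unfolded l]] closed[OF cB] Cons(1)[OF s]
        tail_visited[OF s] tail_visited[OF Cons(2)] l by (cases bb) auto
  qed
  have "H \<in> V" using Q tail by (auto simp: visited_def)
  thus ?thesis using tail by (auto simp: visited_def)
qed

lemma numbering:
  assumes e: "bij_betw e visited {1..m}"
    and D_def: "\<And>c. D c = e ` {P \<in> visited. P #> inv c \<in> visited}"
    and \<pi>_def: "\<And>c i. \<pi> c i = e (inv_into visited e i #> inv c)"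
  shows "D c \<subseteq> {1..m}" and "\<pi> c ` D c \<subseteq> {1..m}" and "c \<in> B \<Longrightarrow> inj_on (\<pi> c) (D c)"
    and "P \<in> visited \<Longrightarrow> P #> inv c \<in> visited \<Longrightarrow> e P \<in> D c \<and> \<pi> c (e P) = e (P #> inv c)"
    and "Q \<in> visited \<Longrightarrow> e Q \<in> U \<Longrightarrow> (\<And>c i. c \<in> B \<Longrightarrow> i \<in> D c \<Longrightarrow> i \<in> U \<longleftrightarrow> \<pi> c i \<in> U)
         \<Longrightarrow> {1..m} \<subseteq> U"
proof -
  have inj: "inj_on e visited" and img: "e ` visited = {1..m}" using e by (auto simp: bij_betw_def)
  have \<pi>e: "\<pi> c (e P) = e (P #> inv c)" if "P \<in> visited" for c P
    using inv_into_f_f[OF inj that] by (simp add: \<pi>_def)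
  show "D c \<subseteq> {1..m}" using img by (auto simp: D_def)
  show "\<pi> c ` D c \<subseteq> {1..m}" using img \<pi>e by (auto simp: D_def)
  show "P \<in> visited \<Longrightarrow> P #> inv c \<in> visited \<Longrightarrow> e P \<in> D c \<and> \<pi> c (e P) = e (P #> inv c)"
    using \<pi>e by (auto simp: D_def)
  show "inj_on (\<pi> c) (D c)" if c: "c \<in> B"
  proof (rule inj_onI)
    fix i i' assume "i \<in> D c" "i' \<in> D c" "\<pi> c i = \<pi> c i'"
    then obtain P P' where P: "P \<in> visited" "P #> inv c \<in> visited" "i = e P"
      and P': "P' \<in> visited" "P' #> inv c \<in> visited" "i' = e P'"
      and "e (P #> inv c) = e (P' #> inv c)" using \<pi>e by (auto simp: D_def)
    hence "P #> inv c = P' #> inv c" using inj by (auto dest: inj_onD)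
    hence "P = P'" using coset_translate_inj[OF subgroup_H] P P' visited_rcosets c basis(1) by blast
    thus "i = i'" using P P' by simp
  qed
  assume Q: "Q \<in> visited" "e Q \<in> U" and closed: "\<And>c i. c \<in> B \<Longrightarrow> i \<in> D c \<Longrightarrow> i \<in> U \<longleftrightarrow> \<pi> c i \<in> U"
  have "visited \<subseteq> {P. e P \<in> U}"
  proof (rule connected)
    fix c P assume "c \<in> B" "P \<in> visited" "P #> inv c \<in> visited"
    thus "P \<in> {P. e P \<in> U} \<longleftrightarrow> P #> inv c \<in> {P. e P \<in> U}"
      using closed[of c "e P"] \<pi>e by (auto simp: D_def)
  qed (use Q in auto)
  hence "e ` visited \<subseteq> U" by blast
  thus "{1..m} \<subseteq> U" using img by simp
qed

lemma word_action:
  assumes \<tau>: "\<And>c. c \<in> B \<Longrightarrow> \<tau> c \<in> carrier (alt_group k)"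
    and edges: "\<And>c P. c \<in> B \<Longrightarrow> P \<in> visited \<Longrightarrow> P #> inv c \<in> visited \<Longrightarrow> \<tau> c (e P) = e (P #> inv c)"
  shows "s \<in> tails \<Longrightarrow> word_eval (alt_group k) (mapw \<tau> s) (e H) = e (hcoset (word_eval F s))"
proof (induct s)
  case Nil thus ?case by (simp add: alt_group_one hcoset_one)
next
  case (Cons l s)
  obtain c bb where l: "l = (c, bb)" by (cases l)
  have cB: "c \<in> B" using letters_tails[OF Cons(2)] l by auto
  have s: "s \<in> tails" using tails_Cons[OF Cons(2)] .
  have IH: "word_eval (alt_group k) (mapw \<tau> s) (e H) = e (hcoset (word_eval F s))" using Cons(1)[OF s] .
  have cs: "(c, bb) # s \<in> tails" using Cons(2) l by simp
  have V: "hcoset (word_eval F s) \<in> visited" "hcoset (word_eval F ((c, bb) # s)) \<in> visited"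
    by (rule tail_visited[OF s], rule tail_visited[OF cs])
  have step: "if bb then hcoset (word_eval F s) = hcoset (word_eval F ((c, bb) # s)) #> inv c
         else hcoset (word_eval F ((c, bb) # s)) = hcoset (word_eval F s) #> inv c"
    by (rule tail_step[OF cs])
  show ?case
  proof (cases bb)
    case False
    thus ?thesis using step V edges[OF cB] IH l by (simp add: alt_group_mult)
  next
    case True
    have "\<tau> c (e (hcoset (word_eval F ((c, bb) # s)))) = e (hcoset (word_eval F s))"
      using step V edges[OF cB] True by simp
    moreover have "bij (\<tau> c)" using \<tau>[OF cB] permutes_bij by (auto simp: alt_group_carrier)
    ultimately have "inv' (\<tau> c) (e (hcoset (word_eval F s))) = e (hcoset (word_eval F ((c, bb) # s)))"
      by (metis bij_inv_eq_iff)
    thus ?thesis using True IH l alt_group_inv_equality[OF \<tau>[OF cB]] by (simp add: alt_group_mult)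
  qed
qed

theorem alternating_quotient:
  assumes index: "infinite (rcosets H)" and two: "\<exists>x\<in>B. \<exists>y\<in>B. x \<noteq> y"
  obtains k f e where "f \<in> epi F (alt_group k)" and "inj_on e visited"
    and "\<And>r. r \<in> R \<Longrightarrow> f (word_eval F r) (e H) = e (hcoset (word_eval F r))"
proof -
  obtain b Q where b: "b \<in> B" and Q: "Q \<in> visited" "Q #> inv b \<notin> visited"
    using free_slot[OF index] by blast
  obtain a where a: "a \<in> B" "a \<noteq> b" using two by blast
  obtain e where e: "bij_betw e visited {1..card visited}"
    using finite_same_card_bij[OF finite_visited finite_atLeastAtMost, of 1 "card visited"] by auto
  define D where "D c = e ` {P \<in> visited. P #> inv c \<in> visited}" for c
  define \<pi> where "\<pi> c i = e (inv_into visited e i #> inv c)" for c i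
  note num = numbering[OF e D_def \<pi>_def]
  have q: "e Q \<in> {1..card visited}" using bij_betw_apply[OF e Q(1)] .
  have inj: "inj_on e visited" using e by (simp add: bij_betw_def)
  have qD: "e Q \<notin> D b"
  proof
    assume "e Q \<in> D b"
    then obtain P where P: "P \<in> visited" "P #> inv b \<in> visited" "e P = e Q" by (auto simp: D_def)
    have "P = Q" by (rule inj_onD[OF inj P(3) P(1) Q(1)])
    thus False using P(2) Q(2) by simp
  qed
  from alternating_extension[where B = B and D = D and \<pi> = \<pi> and m = "card visited" and q = "e Q",
      OF num(1,2,3) a(1) b a(2) q qD num(5)[OF Q(1)]]
  obtain k \<tau> where \<tau>: "\<forall>c\<in>B. \<tau> c \<in> carrier (alt_group k)" and \<tau>D: "\<forall>c\<in>B. \<forall>i\<in>D c. \<tau> c i = \<pi> c i"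
    and gen: "generate (alt_group k) (\<tau> ` B) = carrier (alt_group k)"
    by blast
  have edges: "\<tau> c (e P) = e (P #> inv c)" if "c \<in> B" "P \<in> visited" "P #> inv c \<in> visited" for c P
    using num(4)[OF that(2,3)] \<tau>D that(1) by simp
  define f where "f = free_extension F B (alt_group k) \<tau>"
  show thesis
  proof (rule that)
    show "f \<in> epi F (alt_group k)"
      unfolding f_def using \<tau> gen by (intro free_extension_epi[OF is_group alt_group_is_group free]) auto
    show "inj_on e visited" by (rule inj)
    fix r assume r: "r \<in> R"
    have "f (word_eval F r) = word_eval (alt_group k) (mapw \<tau> r)"
      unfolding f_def using \<tau> letters_R[OF r] by (intro free_extension_word[OF is_group alt_group_is_group free]) auto
    thus "f (word_eval F r) (e H) = e (hcoset (word_eval F r))"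
      using word_action[of \<tau> k e, OF _ edges tails_R[OF r]] \<tau> by simp
  qed
qed

text \<open>Consequently, if the words of \<open>R\<close> include words for generators \<open>S\<close> of \<open>H\<close> and for elements
  \<open>\<Gamma>\<close> outside \<open>H\<close>, some epimorphism onto an alternating group separates \<open>\<Gamma>\<close> from the image of \<open>H\<close>:
  \<open>f(H)\<close> fixes the number of \<open>H\<close>, while \<open>f(\<gamma>)\<close> moves it to the number of \<open>\<gamma> \<cdot> H \<noteq> H\<close>.\<close>

theorem separating_quotient:
  assumes index: "infinite (rcosets H)" and two: "\<exists>x\<in>B. \<exists>y\<in>B. x \<noteq> y"
    and S: "S \<subseteq> word_eval F ` R" "H = generate F S"
    and \<Gamma>: "\<Gamma> \<subseteq> word_eval F ` R" "\<Gamma> \<inter> H = {}"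
  shows "\<exists>k f. f \<in> epi F (alt_group k) \<and> (\<forall>\<gamma>\<in>\<Gamma>. f \<gamma> \<notin> f ` H)"
proof (rule alternating_quotient[OF index two])
  fix k f e assume epi: "f \<in> epi F (alt_group k)" and e: "inj_on e visited"
    and action: "\<And>r. r \<in> R \<Longrightarrow> f (word_eval F r) (e H) = e (hcoset (word_eval F r))"
  have SF: "S \<subseteq> carrier F" using S(1) tail_closed[OF tails_R] by blast
  have "f s (e H) = e H" if s: "s \<in> S" for s
  proof -
    obtain r where r: "r \<in> R" "s = word_eval F r" using S(1) s by blast
    have "s \<in> H" using s S(2) by (auto intro: generate.incl)
    hence "hcoset s = H" using hcoset_eq_H SF s by blast
    thus ?thesis using action[OF r(1)] r(2) by simp
  qed
  hence fixes_H: "f h (e H) = e H" if "h \<in> H" for h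
    using hom_fixes_generate[OF is_group _ SF] epi that S(2) by (auto simp: epi_def)
  have "f \<gamma> \<notin> f ` H" if \<gamma>: "\<gamma> \<in> \<Gamma>" for \<gamma>
  proof
    obtain r where r: "r \<in> R" "\<gamma> = word_eval F r" using \<Gamma>(1) \<gamma> by blast
    assume "f \<gamma> \<in> f ` H"
    hence "e (hcoset \<gamma>) = e H" using action[OF r(1)] r(2) fixes_H by auto
    moreover have "hcoset \<gamma> \<in> visited" "H \<in> visited"
      using tail_visited[OF tails_R[OF r(1)]] r(2) by (simp_all add: visited_def)
    ultimately have "hcoset \<gamma> = H" using e by (auto dest: inj_onD)
    thus False using hcoset_eq_H tail_closed[OF tails_R[OF r(1)]] r(2) \<gamma> \<Gamma>(2) by auto
  qed
  thus ?thesis using epi by blast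
qed

end

theorem theoremA:
  fixes F :: "('a, 'b) monoid_scheme" and B :: "'a set" and S :: "'a set" and H :: "'a set"
    and \<gamma> :: "nat \<Rightarrow> 'a" and n :: nat
  assumes "group F"
    and "free_basis F B"
    and "\<exists>x\<in>B. \<exists>y\<in>B. x \<noteq> y"
    and "finite S" and "S \<subseteq> carrier F" and "H = generate F S"
    and "infinite (rcosets\<^bsub>F\<^esub> H)"
    and "\<forall>i\<in>{1..n}. \<gamma> i \<in> carrier F - H"
  shows "\<exists>k f. f \<in> epi F (alt_group k) \<and> (\<forall>i\<in>{1..n}. f (\<gamma> i) \<notin> f ` H)"
proof -
  have B: "B \<subseteq> carrier F" "generate F B = carrier F" using assms(2) by (auto simp: free_basis_def)
  define Gs where "Gs = S \<union> \<gamma> ` {1..n}"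
  define R where "R = basis_word F B ` Gs"
  have "Gs \<subseteq> generate F B" using assms(5,8) B(2) by (auto simp: Gs_def)
  hence words: "set (map fst (basis_word F B g)) \<subseteq> B" "word_eval F (basis_word F B g) = g"
    if "g \<in> Gs" for g
    using basis_word[OF assms(1) B(1)] that by auto
  have HF: "subgroup H F" using group.generate_is_subgroup[OF assms(1,5)] assms(6) by simp
  have fin: "finite R" using assms(4) by (simp add: R_def Gs_def)
  have letters: "set (map fst r) \<subseteq> B" if "r \<in> R" for r using that words(1) by (auto simp: R_def)
  interpret schreier_graph F B H R
    by (rule schreier_graph.intro[OF assms(1) schreier_graph_axioms.intro[OF assms(2) HF fin letters]])
  have "Gs \<subseteq> word_eval F ` R"
  proof
    fix g assume "g \<in> Gs"
    thus "g \<in> word_eval F ` R" using words(2)[of g] unfolding R_def by (metis image_eqI)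
  qed
  hence "S \<subseteq> word_eval F ` R" "\<gamma> ` {1..n} \<subseteq> word_eval F ` R" by (auto simp: Gs_def)
  moreover have "\<gamma> ` {1..n} \<inter> H = {}" using assms(8) by auto
  ultimately have "\<exists>k f. f \<in> epi F (alt_group k) \<and> (\<forall>g\<in>\<gamma> ` {1..n}. f g \<notin> f ` H)"
    by (rule separating_quotient[OF assms(7,3) _ assms(6)])
  thus ?thesis by simp
qed

end
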